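(* For every integer $s\geq 1$ there exist constants $Q_s \geq 1$ and $C_s \geq 1$ such that the following holds. Let $\phi : \mathbb{R} \to \mathbb{R}/\mathbb{Z}$ be a polynomial phase of degree $s$, let $N \geq 1$, and suppose that $\operatorname{diam}_{[N]}(\phi) \leq \frac{1}{10}$. Then there is an integer $1 \leq q \leq Q_s$ such that $\|q\phi\|_{C^\infty[N]} \leq C_s$.
   Context: $[N] := \{1,\dots,N\}$. A polynomial phase of degree $s$ is a map $\phi(x) = \sum_{j=0}^{s} \alpha_j x^j \bmod 1$ with real coefficients. $\operatorname{diam}_S(\phi) := \sup_{s_1,s_2\in S}\|\phi(s_1)-\phi(s_2)\|_{\mathbb{R}/\mathbb{Z}}$, where $\|\cdot\|_{\mathbb{R}/\mathbb{Z}}$ is the distance to the nearest integer. Smoothness norm: writing a polynomial phase as $p(n) = \beta_0 + \beta_1\binom{n}{1} + \cdots + \beta_s\binom{n}{s} \bmod 1$, one sets $\|p\|_{C^\infty[N]} := \sup_{1 \leq j \leq s} N^j \|\beta_j\|_{\mathbb{R}/\mathbb{Z}}$. *)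

theory Defs
  imports Complex_Main
begin

definition nint_dist :: "real \<Rightarrow> real" where
  "nint_dist x = \<bar>x - of_int (round x)\<bar>"

text \<open>The real polynomial sum_{j=0}^s a_j x^j; the phase is this value taken mod 1.\<close>
definition poly_phase :: "nat \<Rightarrow> (nat \<Rightarrow> real) \<Rightarrow> real \<Rightarrow> real" where
  "poly_phase s a x = (\<Sum>j\<le>s. a j * x ^ j)"

definition diam_on :: "real set \<Rightarrow> (real \<Rightarrow> real) \<Rightarrow> real" where
  "diam_on S f = (SUP p\<in>S \<times> S. nint_dist (f (fst p) - f (snd p)))"

definition int_range :: "nat \<Rightarrow> real set" where
  "int_range N = real ` {1..N}"

text \<open>The coefficients b are uniquely determined.\<close>
definition binom_coeffs :: "nat \<Rightarrow> (nat \<Rightarrow> real) \<Rightarrow> nat \<Rightarrow> real" where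
  "binom_coeffs s a = (THE b. (\<forall>j>s. b j = 0) \<and>
      (\<forall>x::real. poly_phase s a x = (\<Sum>j\<le>s. b j * (x gchoose j))))"

definition smooth_norm :: "nat \<Rightarrow> nat \<Rightarrow> (nat \<Rightarrow> real) \<Rightarrow> real" where
  "smooth_norm N s a = (SUP j\<in>{1..s}. real N ^ j * nint_dist (binom_coeffs s a j))"

end

theory Submission
  imports Defs "HOL-Computational_Algebra.Formal_Power_Series"
begin

(*
  Write the phase in the binomial basis, p(n) = \<Sum>_j b_j (n choose j).
  The theorem is derived from an inverse theorem for Weyl sums, proved by induction on
  the degree s: for every \<delta> > 0 there are Q and C such that
      |\<Sum>_{n\<le>N} e(p(n))| \<ge> \<delta> N   implies   N^j \<parallel>q b_j\<parallel> \<le> C (1 \<le> j \<le> s) for some q \<le> Q.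
  A phase of diameter at most 1/10 on [N] gives |\<Sum>_{n\<le>N} e(p(n))| \<ge> N/2, whence the theorem.
  The induction step (degree s+1) has three stages:
   (1) Weyl differencing (van der Corput): for many shifts h the differenced phase
       p(n+h) - p(n), of degree s, has a large Weyl sum; the induction hypothesis and
       a pigeonhole argument give one q0 controlling all its coefficients for many h;
   (2) descent: the coefficient of degree j of the differenced phase is b_{j+1} h plus
       already controlled terms, so \<parallel>m b_{j+1} h\<parallel> is small for many h, and a lemma of
       Vinogradov type controls \<parallel>q' m b_{j+1}\<parallel>; this handles b_{s+1}, ..., b_2 in turn;
   (3) the linear coefficient: on progressions of common difference m (s+1)! the phase is
       nearly linear, and a large geometric sum forces \<parallel>m (s+1)! b_1\<parallel> to be small.
*)

section \<open>Distance to the nearest integer\<close>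

lemma nint_dist_nonneg: "0 \<le> nint_dist x"
  by (simp add: nint_dist_def)

lemma nint_dist_le_half: "nint_dist x \<le> 1/2"
  unfolding nint_dist_def using of_int_round_abs_le[of x] by (simp add: abs_minus_commute)

lemma nint_dist_le_int: "nint_dist x \<le> \<bar>x - of_int k\<bar>"
proof (cases "k = round x")
  case True then show ?thesis by (simp add: nint_dist_def)
next
  case False
  then have "1 \<le> \<bar>k - round x\<bar>" by auto
  then have "1 \<le> \<bar>of_int k - of_int (round x)::real\<bar>"
    by (metis of_int_1_le_iff of_int_abs of_int_diff)
  moreover have "\<bar>x - of_int (round x)\<bar> \<le> 1/2"
    using nint_dist_le_half[of x] by (simp add: nint_dist_def)
  ultimately show ?thesis unfolding nint_dist_def by linarith
qed

lemma nint_dist_add: "nint_dist (x + y) \<le> nint_dist x + nint_dist y"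
proof -
  have "nint_dist (x + y) \<le> \<bar>x + y - of_int (round x + round y)\<bar>" by (rule nint_dist_le_int)
  also have "\<dots> \<le> nint_dist x + nint_dist y" unfolding nint_dist_def by simp
  finally show ?thesis .
qed

lemma nint_dist_minus: "nint_dist (- x) = nint_dist x"
  using nint_dist_le_int[of "-x" "- round x"] nint_dist_le_int[of "x" "- round (-x)"]
  by (simp add: nint_dist_def abs_minus_commute)

lemma nint_dist_diff: "nint_dist (x - y) \<le> nint_dist x + nint_dist y"
  using nint_dist_add[of x "-y"] nint_dist_minus[of y] by simp

lemma nint_dist_int_add: "nint_dist (x + of_int k) = nint_dist x"
  using nint_dist_le_int[of "x + of_int k" "round x + k"] nint_dist_le_int[of "x" "round (x + of_int k) - k"]
  by (simp add: nint_dist_def)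

lemma nint_dist_mult_nat: "nint_dist (real n * x) \<le> real n * nint_dist x"
proof -
  have "nint_dist (real n * x) \<le> \<bar>real n * x - of_int (int n * round x)\<bar>" by (rule nint_dist_le_int)
  also have "\<dots> = real n * nint_dist x" unfolding nint_dist_def
    by (simp add: abs_mult right_diff_distrib[symmetric])
  finally show ?thesis .
qed

lemma nint_dist_sum: "finite A \<Longrightarrow> nint_dist (\<Sum>a\<in>A. f a) \<le> (\<Sum>a\<in>A. nint_dist (f a))"
proof (induction A rule: finite_induct)
  case empty then show ?case by (simp add: nint_dist_def)
next
  case (insert a A)
  then show ?case using nint_dist_add[of "f a" "sum f A"] by simp
qed

section \<open>The binomial basis\<close>

definition binom_poly :: "nat \<Rightarrow> (nat \<Rightarrow> real) \<Rightarrow> real \<Rightarrow> real" where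
  "binom_poly s b x = (\<Sum>j\<le>s. b j * (x gchoose j))"

definition binom_span :: "nat \<Rightarrow> (real \<Rightarrow> real) \<Rightarrow> bool" where
  "binom_span s f \<longleftrightarrow> (\<exists>b. \<forall>x. f x = binom_poly s b x)"

lemma gchoose_nat: "(real k gchoose j) = real (k choose j)"
  by (simp add: binomial_gbinomial)

lemma binom_poly_add: "binom_poly s (\<lambda>i. b i + c i) x = binom_poly s b x + binom_poly s c x"
  by (simp add: binom_poly_def sum.distrib distrib_right)

lemma binom_poly_scale: "binom_poly s (\<lambda>i. r * b i) x = r * binom_poly s b x"
  by (simp add: binom_poly_def sum_distrib_left mult.assoc)

lemma binom_poly_lift: "j \<le> s \<Longrightarrow> binom_poly j b x = binom_poly s (\<lambda>i. if i \<le> j then b i else 0) x"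
proof -
  assume js: "j \<le> s"
  have "binom_poly s (\<lambda>i. if i \<le> j then b i else 0) x = (\<Sum>i\<le>s. if i \<le> j then b i * (x gchoose i) else 0)"
    unfolding binom_poly_def by (rule sum.cong) auto
  also have "\<dots> = (\<Sum>i\<in>{i\<in>{..s}. i \<le> j}. b i * (x gchoose i))"
    by (rule sum.inter_filter[symmetric]) simp
  also have "{i\<in>{..s}. i \<le> j} = {..j}" using js by auto
  finally show ?thesis by (simp add: binom_poly_def)
qed

lemma binom_span_mono:
  assumes "binom_span j f" "j \<le> s" shows "binom_span s f"
proof -
  obtain b where "\<forall>x. f x = binom_poly j b x" using assms(1) unfolding binom_span_def by blast
  then have "\<forall>x. f x = binom_poly s (\<lambda>i. if i \<le> j then b i else 0) x"
    using binom_poly_lift[OF assms(2)] by simp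
  then show ?thesis unfolding binom_span_def by blast
qed

lemma binom_span_add:
  assumes "binom_span s f" "binom_span s g" shows "binom_span s (\<lambda>x. f x + g x)"
proof -
  obtain b c where "\<forall>x. f x = binom_poly s b x" "\<forall>x. g x = binom_poly s c x"
    using assms unfolding binom_span_def by blast
  then have "\<forall>x. f x + g x = binom_poly s (\<lambda>i. b i + c i) x" by (simp add: binom_poly_add)
  then show ?thesis unfolding binom_span_def by blast
qed

lemma binom_span_scale:
  assumes "binom_span s f" shows "binom_span s (\<lambda>x. r * f x)"
proof -
  obtain b where "\<forall>x. f x = binom_poly s b x" using assms unfolding binom_span_def by blast
  then have "\<forall>x. r * f x = binom_poly s (\<lambda>i. r * b i) x" by (simp add: binom_poly_scale)
  then show ?thesis unfolding binom_span_def by blast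
qed

lemma binom_span_sum:
  "finite A \<Longrightarrow> (\<And>a. a \<in> A \<Longrightarrow> binom_span s (f a)) \<Longrightarrow> binom_span s (\<lambda>x. \<Sum>a\<in>A. f a x)"
proof (induction A rule: finite_induct)
  case empty
  have "\<forall>x. (\<Sum>a\<in>{}. f a x) = binom_poly s (\<lambda>_. 0) x" by (simp add: binom_poly_def)
  then show ?case unfolding binom_span_def by blast
next
  case (insert a A)
  then show ?case by (simp add: binom_span_add)
qed

lemma binom_span_gchoose:
  assumes "i \<le> s" shows "binom_span s (\<lambda>x. x gchoose i)"
proof -
  have "binom_poly s (\<lambda>k. if k = i then 1 else 0) x = (\<Sum>j\<le>s. if j = i then x gchoose j else 0)" for x
    unfolding binom_poly_def by (rule sum.cong) auto
  also have "\<dots> x = x gchoose i" for x using assms by simp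
  finally show ?thesis unfolding binom_span_def by (intro exI[of _ "\<lambda>k. if k = i then 1 else 0"]) simp
qed

text \<open>Every monomial \<open>x^j\<close> lies in the span, by induction on \<open>j\<close>, using
  \<open>x (x choose i) = i (x choose i) + (i+1) (x choose i+1)\<close>.\<close>
lemma binom_span_power: "binom_span j (\<lambda>x. x ^ j)"
proof (induction j)
  case 0
  show ?case unfolding binom_span_def binom_poly_def by (intro exI[of _ "\<lambda>_. 1"]) simp
next
  case (Suc j)
  then obtain b where b: "\<forall>x. x ^ j = binom_poly j b x" unfolding binom_span_def by auto
  have "binom_span (Suc j) (\<lambda>x. \<Sum>i\<le>j. b i * (real i * (x gchoose i) + real (Suc i) * (x gchoose Suc i)))"
    by (intro binom_span_sum binom_span_scale binom_span_add binom_span_gchoose) auto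
  moreover have "x ^ Suc j = (\<Sum>i\<le>j. b i * (real i * (x gchoose i) + real (Suc i) * (x gchoose Suc i)))" for x
  proof -
    have "x ^ Suc j = (\<Sum>i\<le>j. b i * (x * (x gchoose i)))"
      using b by (simp add: binom_poly_def sum_distrib_left algebra_simps)
    then show ?thesis by (simp add: gbinomial_mult_1)
  qed
  ultimately show ?case by simp
qed

lemma binom_span_poly_phase: "binom_span s (poly_phase s a)"
  unfolding poly_phase_def
  by (intro binom_span_sum binom_span_scale binom_span_mono[OF binom_span_power]) auto

text \<open>The binomials \<open>x choose j\<close>, \<open>j \<le> s\<close>, are linearly independent already on \<open>0, ..., s\<close>:
  evaluating at \<open>k\<close> is triangular with unit diagonal.\<close>
lemma binom_basis_independent:
  assumes "\<forall>k\<le>s. (\<Sum>j\<le>s. c j * (real k gchoose j)) = 0"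
  shows "\<forall>j\<le>s. c j = 0"
proof -
  have "j \<le> s \<longrightarrow> c j = 0" for j
  proof (induction j rule: less_induct)
    case (less j)
    show ?case
    proof
      assume js: "j \<le> s"
      have "(\<Sum>i\<le>s. c i * (real j gchoose i)) = (\<Sum>i\<le>s. if i = j then c j else 0)"
        using less by (intro sum.cong) (auto simp: gchoose_nat dest: binomial_eq_0)
      then have "(\<Sum>i\<le>s. c i * (real j gchoose i)) = c j"
        using js by simp
      then show "c j = 0" using assms js by simp
    qed
  qed
  then show ?thesis by blast
qed

lemma binom_coeffs_eqI:
  assumes "\<forall>j>s. b j = 0" "\<forall>x. poly_phase s a x = binom_poly s b x"
  shows "binom_coeffs s a = b"
  unfolding binom_coeffs_def
proof (rule the_equality)
  show "(\<forall>j>s. b j = 0) \<and> (\<forall>x. poly_phase s a x = (\<Sum>j\<le>s. b j * (x gchoose j)))"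
    using assms by (simp add: binom_poly_def)
next
  fix b' assume b': "(\<forall>j>s. b' j = 0) \<and> (\<forall>x. poly_phase s a x = (\<Sum>j\<le>s. b' j * (x gchoose j)))"
  have "\<forall>k\<le>s. (\<Sum>j\<le>s. (b' j - b j) * (real k gchoose j)) = 0"
    using b' assms by (auto simp: binom_poly_def sum_subtractf left_diff_distrib)
  then have low: "\<forall>j\<le>s. b' j - b j = 0" by (rule binom_basis_independent)
  show "b' = b"
  proof
    fix j show "b' j = b j" using low conjunct1[OF b'] assms(1) by (cases "j \<le> s") auto
  qed
qed

lemma binom_coeffs_props:
  "(\<forall>j>s. binom_coeffs s a j = 0) \<and> (\<forall>x. poly_phase s a x = binom_poly s (binom_coeffs s a) x)"
proof -
  obtain c where c: "\<forall>x. poly_phase s a x = binom_poly s c x"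
    using binom_span_poly_phase unfolding binom_span_def by blast
  define b where "b i = (if i \<le> s then c i else 0)" for i
  have b: "\<forall>j>s. b j = 0" "\<forall>x. poly_phase s a x = binom_poly s b x"
    using c binom_poly_lift[of s s c] unfolding b_def by auto
  then show ?thesis using binom_coeffs_eqI[OF b] by simp
qed

lemma poly_phase_eq_binom_poly: "poly_phase s a x = binom_poly s (binom_coeffs s a) x"
  using binom_coeffs_props by blast

lemma binom_coeffs_scale: "binom_coeffs s (\<lambda>j. r * a j) = (\<lambda>j. r * binom_coeffs s a j)"
proof (rule binom_coeffs_eqI)
  show "\<forall>j>s. r * binom_coeffs s a j = 0"
    using binom_coeffs_props by simp
  have "poly_phase s (\<lambda>j. r * a j) x = r * poly_phase s a x" for x
    by (simp add: poly_phase_def sum_distrib_left mult.assoc)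
  then show "\<forall>x. poly_phase s (\<lambda>j. r * a j) x = binom_poly s (\<lambda>j. r * binom_coeffs s a j) x"
    by (simp add: binom_poly_scale poly_phase_eq_binom_poly)
qed

section \<open>The additive character \<open>e(x) = exp(2 pi i x)\<close>\<close>

definition cis2pi :: "real \<Rightarrow> complex" where "cis2pi x = cis (2 * pi * x)"

lemma cis2pi_add: "cis2pi (x + y) = cis2pi x * cis2pi y"
  by (simp add: cis2pi_def cis_mult distrib_left)

lemma cis2pi_norm [simp]: "norm (cis2pi x) = 1"
  by (simp add: cis2pi_def)

lemma cis2pi_zero [simp]: "cis2pi 0 = 1"
  by (simp add: cis2pi_def)

lemma cis2pi_cnj: "cnj (cis2pi x) = cis2pi (- x)"
  by (simp add: cis2pi_def complex_eq_iff)

lemma cis2pi_int: "cis2pi (of_int k) = 1"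
  unfolding cis2pi_def by (rule cis_multiple_2pi) simp

lemma cis2pi_int_add: "cis2pi (x + of_int k) = cis2pi x"
  by (simp add: cis2pi_add cis2pi_int)

lemma cis2pi_diff: "cis2pi (x - y) = cis2pi x * cnj (cis2pi y)"
  using cis2pi_add[of x "-y"] by (simp add: cis2pi_cnj)

lemma cis2pi_round: "cis2pi x = cis2pi (x - of_int (round x))"
  using cis2pi_int_add[of "x - of_int (round x)" "round x"] by simp

lemma sin_lower: assumes "0 \<le> z" "z \<le> pi/3" shows "z / 2 \<le> sin z"
proof (cases "z = 0")
  case True then show ?thesis by simp
next
  case False
  then have z0: "0 < z" using assms by simp
  obtain \<xi> where xi: "0 < \<xi>" "\<xi> < z" "sin z - sin 0 = (z - 0) * cos \<xi>"
    using MVT2[of 0 z sin cos] z0 by (auto intro: DERIV_sin)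
  have "cos (pi/3) \<le> cos \<xi>"
    by (rule cos_monotone_0_pi_le) (use xi assms in auto)
  then have "1/2 \<le> cos \<xi>" by (simp add: cos_60)
  then show ?thesis using xi z0 by (simp add: mult_left_mono[of "1/2" "cos \<xi>" z, simplified])
qed

lemma nint_dist_le_cis2pi_sub1: "nint_dist b \<le> norm (cis2pi b - 1)"
proof -
  define y where "y = b - of_int (round b)"
  have ey: "cis2pi b = cis2pi y" unfolding y_def by (rule cis2pi_round)
  have ny: "nint_dist b = \<bar>y\<bar>" by (simp add: y_def nint_dist_def)
  have yb: "\<bar>y\<bar> \<le> 1/2" using nint_dist_le_half[of b] ny by simp
  have c: "cos (2 * pi * y) = cos (2 * pi * \<bar>y\<bar>)"
    by (cases "y \<ge> 0") (auto simp: abs_if)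
  have sn: "\<bar>sin (2 * pi * y)\<bar> = sin (2 * pi * \<bar>y\<bar>)"
  proof -
    have "0 \<le> sin (2 * pi * \<bar>y\<bar>)" using yb by (intro sin_ge_zero) auto
    then show ?thesis by (cases "y \<ge> 0") (auto simp: abs_if)
  qed
  have re: "Re (cis2pi b - 1) = cos (2 * pi * y) - 1" and im: "Im (cis2pi b - 1) = sin (2*pi*y)"
    using ey by (simp_all add: cis2pi_def)
  show ?thesis
  proof (cases "\<bar>y\<bar> \<le> 1/6")
    case True
    have "2 * pi * \<bar>y\<bar> / 2 \<le> sin (2 * pi * \<bar>y\<bar>)"
      by (rule sin_lower) (use True in auto)
    moreover have "\<bar>y\<bar> \<le> 2 * pi * \<bar>y\<bar> / 2" using pi_ge_two mult_right_mono[of 1 pi "\<bar>y\<bar>"] by simp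
    moreover have "\<bar>Im (cis2pi b - 1)\<bar> \<le> norm (cis2pi b - 1)" by (rule abs_Im_le_cmod)
    ultimately show ?thesis using ny im sn by linarith
  next
    case False
    have "cos (2 * pi * \<bar>y\<bar>) \<le> cos (pi/3)"
      by (rule cos_monotone_0_pi_le) (use False yb in auto)
    then have "cos (2 * pi * y) \<le> 1/2" using c by (simp add: cos_60)
    moreover have "\<bar>Re (cis2pi b - 1)\<bar> \<le> norm (cis2pi b - 1)" by (rule abs_Re_le_cmod)
    ultimately show ?thesis using ny re yb by linarith
  qed
qed

lemma cis2pi_sub1_le: "norm (cis2pi x - 1) \<le> 2 * pi * \<bar>x\<bar>"
proof -
  define a where "a = 2 * pi * x"
  have "(norm (cis2pi x - 1))^2 = (cos a - 1)^2 + (sin a)^2"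
    by (simp add: cis2pi_def a_def cmod_power2)
  also have "\<dots> = 2 - 2 * cos a" by (simp add: power2_eq_square algebra_simps sin_squared_eq)
  also have "\<dots> = 4 * (sin (a/2))^2" using cos_double_sin[of "a/2"] by simp
  also have "\<dots> = (2 * \<bar>sin (a/2)\<bar>)^2" by (simp add: power2_eq_square)
  finally have sq: "(norm (cis2pi x - 1))^2 = (2 * \<bar>sin (a/2)\<bar>)^2" .
  have "norm (cis2pi x - 1) = 2 * \<bar>sin (a/2)\<bar>" using power2_eq_imp_eq[OF sq] by simp
  also have "\<dots> \<le> 2 * \<bar>a/2\<bar>" using abs_sin_x_le_abs_x[of "a/2"] by simp
  also have "\<dots> = 2 * pi * \<bar>x\<bar>" unfolding a_def by (simp add: abs_mult)
  finally show ?thesis .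
qed


lemma geometric_sum_bound:
  "nint_dist b * norm (\<Sum>t\<in>{m..<n::nat}. cis2pi (b * real t)) \<le> 2"
proof (cases "m \<le> n")
  case False then show ?thesis by simp
next
  case True
  have "(cis2pi b - 1) * (\<Sum>t\<in>{m..<n}. cis2pi (b * real t)) = (\<Sum>t\<in>{m..<n}. cis2pi (b * real (Suc t)) - cis2pi (b * real t))"
    by (simp add: sum_distrib_left algebra_simps cis2pi_add[symmetric])
  also have "\<dots> = cis2pi (b * real n) - cis2pi (b * real m)"
    using True by (rule sum_Suc_diff')
  finally have eq: "(cis2pi b - 1) * (\<Sum>t\<in>{m..<n}. cis2pi (b * real t)) = cis2pi (b * real n) - cis2pi (b * real m)" .
  have "norm (cis2pi (b * real n) - cis2pi (b * real m)) \<le> 2"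
    using norm_triangle_ineq4[of "cis2pi (b * real n)" "cis2pi (b * real m)"] by simp
  then have "norm (cis2pi b - 1) * norm (\<Sum>t\<in>{m..<n}. cis2pi (b * real t)) \<le> 2"
    using eq by (metis norm_mult)
  moreover have "nint_dist b * norm (\<Sum>t\<in>{m..<n}. cis2pi (b * real t)) \<le> norm (cis2pi b - 1) * norm (\<Sum>t\<in>{m..<n}. cis2pi (b * real t))"
    using nint_dist_le_cis2pi_sub1[of b] by (simp add: mult_right_mono)
  ultimately show ?thesis by linarith
qed




section \<open>The van der Corput inequality\<close>

lemma sum_below_diagonal:
  fixes N :: nat and g :: "nat \<times> nat \<Rightarrow> 'a::comm_monoid_add"
  shows "(\<Sum>p\<in>{p\<in>{1..N}\<times>{1..N}. snd p < fst p}. g p) = (\<Sum>h\<in>{1..<N}. \<Sum>m\<in>{1..N-h}. g (m+h, m))"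
proof -
  define A where "A = {p\<in>{1..N}\<times>{1..N}. snd p < fst p}"
  define B where "B = Sigma {1..<N} (\<lambda>h. {1..N-h})"
  have AB: "A = (\<lambda>(h,m). (m+h, m)) ` B"
  proof
    show "A \<subseteq> (\<lambda>(h,m). (m+h, m)) ` B"
    proof
      fix p assume "p \<in> A"
      then obtain n m where p: "p = (n,m)" "m < n" "1 \<le> m" "n \<le> N" unfolding A_def by auto
      then have "(n - m, m) \<in> B" unfolding B_def by auto
      moreover have "p = (\<lambda>(h,m). (m+h, m)) (n-m, m)" using p by auto
      ultimately show "p \<in> (\<lambda>(h,m). (m+h, m)) ` B" by blast
    qed
  next
    show "(\<lambda>(h,m). (m+h, m)) ` B \<subseteq> A" unfolding A_def B_def by auto
  qed
  have inj: "inj_on (\<lambda>(h,m). (m+h, m)) B" unfolding inj_on_def B_def by auto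
  have "sum g A = (\<Sum>p\<in>B. g ((\<lambda>(h,m). (m+h, m)) p))"
    unfolding AB by (rule sum.reindex[OF inj, unfolded comp_def])
  also have "\<dots> = (\<Sum>h\<in>{1..<N}. \<Sum>m\<in>{1..N-h}. g (m+h, m))"
    unfolding B_def by (subst sum.Sigma) (auto simp: split_def)
  finally show ?thesis unfolding A_def .
qed

lemma van_der_corput:
  fixes f :: "nat \<Rightarrow> real"
  shows "(norm (\<Sum>n\<in>{1..N}. cis2pi (f n)))^2
     \<le> real N + 2 * (\<Sum>h\<in>{1..<N}. norm (\<Sum>m\<in>{1..N-h}. cis2pi (f (m+h) - f m)))"
proof -
  define I where "I = {1..N}"
  define g where "g = (\<lambda>p::nat\<times>nat. cis2pi (f (fst p) - f (snd p)))"
  define S where "S = (\<Sum>n\<in>I. cis2pi (f n))"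
  define A where "A = {p\<in>I\<times>I. snd p < fst p}"
  define D where "D = {p\<in>I\<times>I. fst p = snd p}"
  define A' where "A' = {p\<in>I\<times>I. fst p < snd p}"
  have fin: "finite (I\<times>I)" by (simp add: I_def)
  have "S * cnj S = (\<Sum>n\<in>I. \<Sum>m\<in>I. cis2pi (f n) * cnj (cis2pi (f m)))"
    by (simp add: S_def cnj_sum sum_product)
  also have "\<dots> = (\<Sum>p\<in>I\<times>I. g p)"
    by (simp add: sum.cartesian_product g_def cis2pi_diff split_def)
  also have "\<dots> = (\<Sum>p\<in>I\<times>I. (if snd p < fst p then g p else 0) + (if fst p = snd p then g p else 0)
                     + (if fst p < snd p then g p else 0))"
    by (rule sum.cong) auto
  also have "\<dots> = sum g A + sum g D + sum g A'"
    unfolding A_def D_def A'_def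
    by (simp add: sum.distrib sum.inter_filter[OF fin])
  finally have eq1: "S * cnj S = sum g A + sum g D + sum g A'" .
  have "D = (\<lambda>n. (n,n)) ` I" unfolding D_def by auto
  then have "sum g D = (\<Sum>n\<in>I. g (n,n))" by (simp add: sum.reindex inj_on_def)
  also have "\<dots> = of_nat N" by (simp add: g_def I_def)
  finally have eqD: "sum g D = of_nat N" .
  have "A' = prod.swap ` A" unfolding A_def A'_def by auto
  then have "sum g A' = (\<Sum>p\<in>A. g (prod.swap p))" by (simp add: sum.reindex)
  also have "\<dots> = (\<Sum>p\<in>A. cnj (g p))"
    by (rule sum.cong) (auto simp: g_def cis2pi_cnj)
  also have "\<dots> = cnj (sum g A)" by (simp add: cnj_sum)
  finally have eqA': "sum g A' = cnj (sum g A)" .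
  have eqA: "sum g A = (\<Sum>h\<in>{1..<N}. \<Sum>m\<in>{1..N-h}. cis2pi (f (m+h) - f m))"
    unfolding A_def I_def sum_below_diagonal by (simp add: g_def)
  have "(norm S)^2 = Re (S * cnj S)" by (simp add: complex_mult_cnj cmod_power2)
  also have "\<dots> = real N + 2 * Re (sum g A)" using eq1 eqD eqA' by simp
  also have "\<dots> \<le> real N + 2 * norm (sum g A)" using complex_Re_le_cmod[of "sum g A"] by linarith
  also have "\<dots> \<le> real N + 2 * (\<Sum>h\<in>{1..<N}. norm (\<Sum>m\<in>{1..N-h}. cis2pi (f (m+h) - f m)))"
    unfolding eqA using norm_sum[of "\<lambda>h. \<Sum>m\<in>{1..N-h}. cis2pi (f (m+h) - f m)" "{1..<N}"] by linarith
  finally show ?thesis by (simp add: S_def I_def)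
qed




section \<open>A Vinogradov-type lemma\<close>

lemma finite_int_ivl:
  fixes a b :: real
  shows "finite {k::int. a \<le> of_int k \<and> of_int k \<le> b}"
proof -
  have "{k::int. a \<le> of_int k \<and> of_int k \<le> b} = {ceiling a..floor b}"
    by (auto simp: ceiling_le_iff le_floor_iff)
  then show ?thesis by simp
qed

lemma card_int_ivl:
  fixes a b :: real
  assumes "a \<le> b"
  shows "real (card {k::int. a \<le> of_int k \<and> of_int k \<le> b}) \<le> b - a + 1"
proof -
  have eq: "{k::int. a \<le> of_int k \<and> of_int k \<le> b} = {ceiling a..floor b}"
    by (auto simp: ceiling_le_iff le_floor_iff)
  have "real (card {ceiling a..floor b}) = real (nat (floor b - ceiling a + 1))" by simp
  also have "\<dots> \<le> b - a + 1"
  proof (cases "floor b - ceiling a + 1 \<ge> 0")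
    case True
    then have "real (nat (floor b - ceiling a + 1)) = of_int (floor b) - of_int (ceiling a) + 1" by simp
    also have "\<dots> \<le> b - a + 1" using of_int_floor_le[of b] le_of_int_ceiling[of a] by linarith
    finally show ?thesis .
  next
    case False then show ?thesis using assms by simp
  qed
  finally show ?thesis using eq by simp
qed

lemma card_nat_ivl:
  fixes a b :: real
  assumes "a \<le> b"
  shows "real (card {t::nat. t \<in> T \<and> a \<le> real t \<and> real t \<le> b}) \<le> b - a + 1"
proof -
  have "card {t::nat. t \<in> T \<and> a \<le> real t \<and> real t \<le> b} = card (int ` {t::nat. t \<in> T \<and> a \<le> real t \<and> real t \<le> b})"
    by (simp add: card_image)
  also have "\<dots> \<le> card {k::int. a \<le> of_int k \<and> of_int k \<le> b}"
    by (rule card_mono) (use finite_int_ivl in auto)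
  finally show ?thesis using card_int_ivl[OF assms] by linarith
qed

lemma div_eq_diff_lt:
  fixes u v g :: nat
  assumes "u div g = v div g" "u < v" "0 < g"
  shows "v - u < g"
proof -
  have "v = g * (v div g) + v mod g" "u = g * (v div g) + u mod g"
    using assms(1) by (metis div_mult_mod_eq mult.commute)+
  moreover have "v mod g < g" using assms(3) by simp
  ultimately show ?thesis by linarith
qed

lemma close_pair:
  fixes \<sigma> :: real and S :: "nat set"
  assumes \<sigma>0: "0 < \<sigma>" and SN: "S \<subseteq> {1..N}" and cardS: "\<sigma> * N \<le> card S" and big: "2 < \<sigma> * N"
  shows "\<exists>x\<in>S. \<exists>y\<in>S. x < y \<and> real (y - x) < 2/\<sigma>"
proof -
  define g where "g = nat (ceiling (2/\<sigma>))"
  have g1: "2/\<sigma> \<le> real g" unfolding g_def by linarith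
  have "real g = of_int (ceiling (2/\<sigma>))" unfolding g_def using \<sigma>0 by simp
  then have g2: "real g < 2/\<sigma> + 1" by linarith
  have g0: "0 < g" using g1 \<sigma>0 by (metis divide_pos_pos of_nat_0_less_iff order_less_le_trans zero_less_numeral)
  define blk where "blk h = (h - 1) div g" for h :: nat
  have "blk ` S \<subseteq> {0..(N-1) div g}"
  proof
    fix z assume "z \<in> blk ` S"
    then obtain h where h: "h \<in> S" "z = blk h" by auto
    then have "h \<le> N" using SN by auto
    then have "h - 1 \<le> N - 1" by simp
    then show "z \<in> {0..(N-1) div g}" using h unfolding blk_def by (simp add: div_le_mono)
  qed
  then have "card (blk ` S) \<le> card {0..(N-1) div g}" by (intro card_mono) auto
  then have "card (blk ` S) \<le> (N-1) div g + 1" by simp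
  moreover have "real ((N-1) div g) \<le> \<sigma> * N / 2"
  proof -
    have "real ((N-1) div g) \<le> real (N-1) / real g" by (rule of_nat_div_le_of_nat)
    also have "\<dots> \<le> real N / real g" using g0 by (simp add: divide_right_mono)
    also have "\<dots> \<le> real N / (2/\<sigma>)" using g1 g0 \<sigma>0 by (intro divide_left_mono) auto
    finally show ?thesis by (simp add: mult.commute)
  qed
  ultimately have "real (card (blk ` S)) < card S" using cardS big by linarith
  then have "\<not> inj_on blk S" using pigeonhole by auto
  then obtain x y where xy: "x \<in> S" "y \<in> S" "x < y" "blk x = blk y"
    unfolding inj_on_def by (metis linorder_neqE_nat)
  have "1 \<le> x" using xy SN by auto
  then have "y - x < g" using div_eq_diff_lt[of "x-1" g "y-1"] xy g0 unfolding blk_def by auto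
  then show ?thesis using xy g2 by force
qed

text \<open>Restricting to the residue class mod \<open>q\<close> containing most of \<open>S\<close>: writing \<open>h = r + q t\<close>,
  \<open>\<alpha> h \<equiv> \<alpha> r + t \<beta> (mod 1)\<close> where \<open>\<beta>\<close> is the signed distance of \<open>q \<alpha>\<close> to the integers.\<close>
lemma residue_class_progression:
  fixes \<alpha> \<eta> :: real and S :: "nat set" and q :: nat
  assumes q1: "1 \<le> q" and SN: "S \<subseteq> {1..N}" and hS: "\<forall>h\<in>S. nint_dist (\<alpha> * real h) \<le> \<eta>"
  defines "\<beta> \<equiv> real q * \<alpha> - of_int (round (real q * \<alpha>))"
  shows "\<exists>T \<gamma>. finite T \<and> card S \<le> card T * q \<and> (\<forall>t\<in>T. t \<le> N \<and> nint_dist (\<gamma> + real t * \<beta>) \<le> \<eta>)"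
proof -
  have finS: "finite S" using SN finite_subset by blast
  obtain r where r: "r \<in> {..<q}" "card S \<le> card ((\<lambda>h. h mod q) -` {r} \<inter> S) * card {..<q}"
    using pigeonhole_card[of "\<lambda>h. h mod q" S "{..<q}"] finS q1 by fastforce
  define R where "R = (\<lambda>h. h mod q) -` {r} \<inter> S"
  define T where "T = (\<lambda>h. h div q) ` R"
  have "inj_on (\<lambda>h. h div q) R"
    by (rule inj_onI) (metis R_def div_mult_mod_eq IntD1 vimage_singleton_eq)
  then have "card T = card R" unfolding T_def by (rule card_image)
  then have cardT: "card S \<le> card T * q" using r unfolding R_def by simp
  have good: "t \<le> N \<and> nint_dist (\<alpha> * real r + real t * \<beta>) \<le> \<eta>" if tT: "t \<in> T" for t
  proof -
    obtain h where h: "h \<in> S" "h mod q = r" "t = h div q" using tT unfolding T_def R_def by auto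
    have "real h = real r + real q * real t" using h by (metis div_mult_mod_eq of_nat_add of_nat_mult add.commute mult.commute)
    then have "\<alpha> * real h = (\<alpha> * real r + real t * \<beta>) + of_int (int t * round (real q * \<alpha>))"
      unfolding \<beta>_def by (simp add: algebra_simps)
    then have "nint_dist (\<alpha> * real r + real t * \<beta>) = nint_dist (\<alpha> * real h)"
      by (metis nint_dist_int_add)
    moreover have "t \<le> N" using h SN by (metis atLeastAtMost_iff div_le_dividend le_trans subsetD)
    ultimately show ?thesis using hS h by simp
  qed
  have "finite T" unfolding T_def R_def using finS by simp
  then show ?thesis using cardT good by blast
qed

text \<open>Few points of a progression with small nonzero step \<open>\<beta>\<close> lie near the integers:
  each integer \<open>k\<close> is approached by at most \<open>2\<eta>/|\<beta>| + 1\<close> of them, and only about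
  \<open>2 N |\<beta>|\<close> integers are within reach.\<close>
lemma progression_near_integers:
  fixes \<beta> \<gamma> \<eta> :: real and T :: "nat set"
  assumes finT: "finite T" and \<beta>0: "\<beta> \<noteq> 0" and \<eta>0: "0 \<le> \<eta>" and \<eta>1: "\<eta> \<le> 1/2"
    and good: "\<forall>t\<in>T. t \<le> N \<and> nint_dist (\<gamma> + real t * \<beta>) \<le> \<eta>"
  shows "real (card T) \<le> (2 * real N * \<bar>\<beta>\<bar> + 2) * (2 * \<eta> / \<bar>\<beta>\<bar> + 1)"
proof -
  define X where "X = \<bar>\<beta>\<bar>"
  have X0: "0 < X" using \<beta>0 unfolding X_def by simp
  define K where "K = (\<lambda>t. round (\<gamma> + real t * \<beta>)) ` T"
  define Fk where "Fk \<kappa> = {t\<in>T. \<bar>\<gamma> + real t * \<beta> - of_int \<kappa>\<bar> \<le> \<eta>}" for \<kappa>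
  have near: "\<bar>\<gamma> + real t * \<beta> - of_int (round (\<gamma> + real t * \<beta>))\<bar> \<le> \<eta>" if "t \<in> T" for t
    using good that unfolding nint_dist_def by auto
  have cover: "T \<subseteq> (\<Union>\<kappa>\<in>K. Fk \<kappa>)" using near unfolding K_def Fk_def by auto
  have finK: "finite K" unfolding K_def using finT by simp
  have "card T \<le> card (\<Union>\<kappa>\<in>K. Fk \<kappa>)"
    by (rule card_mono) (use finK finT cover in \<open>auto simp: Fk_def\<close>)
  also have "\<dots> \<le> (\<Sum>\<kappa>\<in>K. card (Fk \<kappa>))" by (rule card_UN_le[OF finK])
  finally have "card T \<le> (\<Sum>\<kappa>\<in>K. card (Fk \<kappa>))" .
  then have c1: "real (card T) \<le> (\<Sum>\<kappa>\<in>K. real (card (Fk \<kappa>)))" by (metis of_nat_le_iff of_nat_sum)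
  have c2: "real (card (Fk \<kappa>)) \<le> 2 * \<eta> / X + 1" for \<kappa>
  proof -
    define c where "c = (of_int \<kappa> - \<gamma>) / \<beta>"
    have "Fk \<kappa> \<subseteq> {t. t \<in> T \<and> c - \<eta>/X \<le> real t \<and> real t \<le> c + \<eta>/X}"
    proof
      fix t assume "t \<in> Fk \<kappa>"
      then have t: "t \<in> T" "\<bar>\<gamma> + real t * \<beta> - of_int \<kappa>\<bar> \<le> \<eta>" unfolding Fk_def by auto
      have "\<gamma> + real t * \<beta> - of_int \<kappa> = \<beta> * (real t - c)" unfolding c_def using \<beta>0 by (simp add: field_simps)
      then have "X * \<bar>real t - c\<bar> \<le> \<eta>" using t unfolding X_def by (simp add: abs_mult)
      then have "\<bar>real t - c\<bar> \<le> \<eta> / X" using X0 by (simp add: field_simps)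
      then show "t \<in> {t. t \<in> T \<and> c - \<eta>/X \<le> real t \<and> real t \<le> c + \<eta>/X}" using t by auto
    qed
    then have "card (Fk \<kappa>) \<le> card {t. t \<in> T \<and> c - \<eta>/X \<le> real t \<and> real t \<le> c + \<eta>/X}"
      by (rule card_mono[rotated]) (use finT in auto)
    moreover have "real (card {t. t \<in> T \<and> c - \<eta>/X \<le> real t \<and> real t \<le> c + \<eta>/X}) \<le> (c + \<eta>/X) - (c - \<eta>/X) + 1"
      by (rule card_nat_ivl) (use X0 \<eta>0 in auto)
    ultimately show ?thesis by simp
  qed
  have c3: "real (card K) \<le> 2 * real N * X + 2"
  proof -
    define I where "I = {\<kappa>::int. \<gamma> - N * X - \<eta> \<le> of_int \<kappa> \<and> of_int \<kappa> \<le> \<gamma> + N * X + \<eta>}"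
    have "K \<subseteq> I"
    proof
      fix \<kappa> assume "\<kappa> \<in> K"
      then obtain t where t: "t \<in> T" "\<kappa> = round (\<gamma> + real t * \<beta>)" unfolding K_def by auto
      have "\<bar>real t * \<beta>\<bar> \<le> N * X" using good t(1) unfolding X_def by (simp add: abs_mult mult_right_mono)
      then show "\<kappa> \<in> I" using near[OF t(1)] t(2) unfolding I_def by auto
    qed
    then have "real (card K) \<le> real (card I)" using card_mono[OF finite_int_ivl] unfolding I_def by simp
    also have "\<dots> \<le> (\<gamma> + N * X + \<eta>) - (\<gamma> - N * X - \<eta>) + 1"
      unfolding I_def by (rule card_int_ivl) (use X0 \<eta>0 in auto)
    finally show ?thesis using \<eta>1 by linarith
  qed
  have "(\<Sum>\<kappa>\<in>K. real (card (Fk \<kappa>))) \<le> real (card K) * (2 * \<eta> / X + 1)"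
    using sum_bounded_above[of K "\<lambda>\<kappa>. real (card (Fk \<kappa>))" "2 * \<eta> / X + 1"] c2 by simp
  also have "\<dots> \<le> (2 * real N * X + 2) * (2 * \<eta> / X + 1)"
    using c3 X0 \<eta>0 by (intro mult_right_mono) auto
  finally show ?thesis using c1 unfolding X_def by linarith
qed

lemma vinogradov_lemma:
  fixes \<alpha> \<eta> \<sigma> :: real and S :: "nat set" and N :: nat
  assumes \<sigma>0: "0 < \<sigma>" and SN: "S \<subseteq> {1..N}" and cardS: "\<sigma> * N \<le> card S"
    and Nbig: "16 / \<sigma>^2 \<le> N" and \<eta>0: "0 \<le> \<eta>" and \<eta>\<sigma>: "\<eta> \<le> \<sigma>^2/32"
    and hS: "\<forall>h\<in>S. nint_dist (\<alpha> * real h) \<le> \<eta>"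
  shows "\<exists>q::nat. 1 \<le> q \<and> real q \<le> 2/\<sigma> \<and> nint_dist (real q * \<alpha>) \<le> 32 * \<eta> / (\<sigma>^2 * N)"
proof -
  have Npos: "0 < real N" using Nbig \<sigma>0 by (smt (verit) divide_pos_pos zero_less_power)
  have "card S \<le> N" using card_mono[OF _ SN] by simp
  then have \<sigma>1: "\<sigma> \<le> 1" using cardS Npos by (smt (verit) mult_le_cancel_right2 of_nat_le_iff)
  have N16: "16 \<le> \<sigma>^2 * N" using Nbig \<sigma>0 by (simp add: field_simps)
  moreover have "\<sigma>^2 * N \<le> \<sigma> * N" using \<sigma>0 \<sigma>1 Npos by (simp add: power2_eq_square)
  ultimately obtain x y where xy: "x \<in> S" "y \<in> S" "x < y" "real (y - x) < 2/\<sigma>"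
    using close_pair[OF \<sigma>0 SN cardS] by fastforce
  define q where "q = y - x"
  have q1: "1 \<le> q" and qgs: "real q < 2/\<sigma>" using xy unfolding q_def by auto
  have qa: "real q * \<alpha> = \<alpha> * real y - \<alpha> * real x" unfolding q_def using xy by (simp add: of_nat_diff algebra_simps)
  have "nint_dist (\<alpha> * real y) \<le> \<eta>" "nint_dist (\<alpha> * real x) \<le> \<eta>" using hS xy by auto
  then have ndq: "nint_dist (real q * \<alpha>) \<le> 2 * \<eta>"
    using nint_dist_diff[of "\<alpha> * real y" "\<alpha> * real x"] unfolding qa by linarith
  define \<beta> where "\<beta> = real q * \<alpha> - of_int (round (real q * \<alpha>))"
  have abs\<beta>: "\<bar>\<beta>\<bar> = nint_dist (real q * \<alpha>)" unfolding \<beta>_def nint_dist_def by simp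
  show ?thesis
  proof (cases "\<beta> = 0")
    case True
    then show ?thesis using q1 qgs abs\<beta> \<eta>0 Npos \<sigma>0 by (intro exI[of _ q]) auto
  next
    case False
    define X where "X = \<bar>\<beta>\<bar>"
    have X0: "0 < X" using False unfolding X_def by simp
    have X2: "X \<le> 2 * \<eta>" using ndq abs\<beta> unfolding X_def by simp
    obtain T \<gamma> where T: "finite T" "card S \<le> card T * q" "\<forall>t\<in>T. t \<le> N \<and> nint_dist (\<gamma> + real t * \<beta>) \<le> \<eta>"
      using residue_class_progression[OF q1 SN hS] unfolding \<beta>_def by blast
    have "\<eta> \<le> 1/2" using \<eta>\<sigma> \<sigma>0 \<sigma>1 power_le_one[of \<sigma> 2] by linarith
    then have "real (card T) \<le> (2 * real N * X + 2) * (2 * \<eta> / X + 1)"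
      using progression_near_integers[OF T(1) False \<eta>0 _ T(3)] unfolding X_def by blast
    also have "\<dots> = 4 * real N * \<eta> + 2 * real N * X + 4 * \<eta> / X + 2" using X0 by (simp add: field_simps)
    also have "\<dots> \<le> \<sigma>^2 * N / 4 + 4 * \<eta> / X + \<sigma>^2 * N / 8"
    proof -
      have "real N * X \<le> real N * (2 * \<eta>)" by (rule mult_left_mono[OF X2]) simp
      moreover have "real N * \<eta> \<le> real N * (\<sigma>^2 / 32)" by (rule mult_left_mono[OF \<eta>\<sigma>]) simp
      ultimately show ?thesis using N16 by (simp add: algebra_simps)
    qed
    finally have up: "real (card T) \<le> \<sigma>^2 * N / 4 + 4 * \<eta> / X + \<sigma>^2 * N / 8" .
    have "\<sigma>^2 * N / 2 = \<sigma> * N / (2/\<sigma>)" using \<sigma>0 by (simp add: power2_eq_square)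
    also have "\<dots> < \<sigma> * N / q" using qgs q1 \<sigma>0 Npos by (intro divide_strict_left_mono) auto
    also have "\<dots> \<le> real (card T)" using cardS T(2) q1 by (simp add: divide_le_eq) (metis of_nat_le_iff of_nat_mult order_trans)
    finally have "\<sigma>^2 * N / 8 < 4 * \<eta> / X" using up by linarith
    then have "X < 32 * \<eta> / (\<sigma>^2 * N)" using X0 \<sigma>0 Npos by (simp add: field_simps)
    then show ?thesis using q1 qgs abs\<beta> unfolding X_def by (intro exI[of _ q]) auto
  qed
qed

lemma vinogradov_scaled:
  fixes \<alpha> V \<sigma> :: real and S :: "nat set" and N j :: nat
  assumes \<sigma>0: "0 < \<sigma>" and SN: "S \<subseteq> {1..N}" "\<sigma> * N \<le> card S" and N16: "16 / \<sigma>^2 \<le> N"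
    and j1: "1 \<le> j" and V0: "0 \<le> V" and VN: "32 * V / \<sigma>^2 \<le> real N"
    and hS: "\<And>h. h \<in> S \<Longrightarrow> real N ^ j * nint_dist (\<alpha> * real h) \<le> V"
  shows "\<exists>q::nat. 1 \<le> q \<and> real q \<le> 2/\<sigma> \<and> real N ^ Suc j * nint_dist (real q * \<alpha>) \<le> 32 * V / \<sigma>^2"
proof -
  define \<eta> where "\<eta> = V / real N ^ j"
  have Npos: "0 < real N" using N16 \<sigma>0 by (smt (verit) divide_pos_pos zero_less_power)
  then have "real N ^ 1 \<le> real N ^ j" using j1 by (intro power_increasing) auto
  then have NjN: "real N \<le> real N ^ j" by simp
  have \<eta>0: "0 \<le> \<eta>" unfolding \<eta>_def using V0 by simp
  have "V \<le> \<sigma>^2 / 32 * real N" using VN \<sigma>0 by (simp add: field_simps)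
  also have "\<dots> \<le> \<sigma>^2 / 32 * real N ^ j" using NjN by (intro mult_left_mono) auto
  finally have \<eta>s: "\<eta> \<le> \<sigma>^2 / 32" unfolding \<eta>_def using Npos by (simp add: divide_le_eq mult.commute)
  have "\<forall>h\<in>S. nint_dist (\<alpha> * real h) \<le> \<eta>"
    using hS Npos unfolding \<eta>_def by (simp add: field_simps)
  then obtain q where q: "1 \<le> q" "real q \<le> 2/\<sigma>" "nint_dist (real q * \<alpha>) \<le> 32 * \<eta> / (\<sigma>^2 * real N)"
    using vinogradov_lemma[OF \<sigma>0 SN N16 \<eta>0 \<eta>s] by blast
  have "real N ^ Suc j * nint_dist (real q * \<alpha>) \<le> real N ^ Suc j * (32 * \<eta> / (\<sigma>^2 * real N))"
    using q(3) by (intro mult_left_mono) auto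
  also have "\<dots> = 32 * V / \<sigma>^2" unfolding \<eta>_def using Npos by (simp add: field_simps)
  finally show ?thesis using q by blast
qed

section \<open>Weyl differencing of the phase\<close>

text \<open>Coefficients of the differenced phase \<open>p(x + h) - p(x)\<close>: by Vandermonde's identity its
  \<open>j\<close>-th binomial coefficient is \<open>\<Sum>_{k\<ge>1} b_{j+k} (h choose k)\<close>.\<close>
definition diff_coeffs :: "nat \<Rightarrow> (nat \<Rightarrow> real) \<Rightarrow> nat \<Rightarrow> nat \<Rightarrow> real" where
  "diff_coeffs s b h j = (\<Sum>k\<in>{1..s-j}. b (j+k) * real (h choose k))"

lemma binom_poly_shift_diff:
  assumes "1 \<le> s"
  shows "binom_poly s b (x + real h) - binom_poly s b x = binom_poly (s-1) (diff_coeffs s b h) x"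
proof -
  define t where "t i k = b i * real (h choose k) * (x gchoose (i - k))" for i k
  have v: "(x + real h) gchoose i = (\<Sum>k=0..i. real (h choose k) * (x gchoose (i-k)))" for i
    using gbinomial_Vandermonde[of "real h" x i] by (simp add: gchoose_nat add.commute)
  have "binom_poly s b (x + real h) = (\<Sum>i\<le>s. \<Sum>k=0..i. t i k)"
    unfolding binom_poly_def t_def v by (simp add: sum_distrib_left mult.assoc)
  also have "\<dots> = (\<Sum>i\<le>s. b i * (x gchoose i) + (\<Sum>k\<in>{1..i}. t i k))"
    by (rule sum.cong) (auto simp: sum.atLeast_Suc_atMost t_def)
  finally have e1: "binom_poly s b (x + real h) - binom_poly s b x = (\<Sum>i\<le>s. \<Sum>k\<in>{1..i}. t i k)"
    by (simp add: sum.distrib binom_poly_def)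
  have "(\<Sum>i\<le>s. \<Sum>k\<in>{1..i}. t i k) = (\<Sum>p\<in>Sigma {..s} (\<lambda>i. {1..i}). t (fst p) (snd p))"
    by (simp add: sum.Sigma split_def)
  also have "\<dots> = (\<Sum>p\<in>Sigma {..s-1} (\<lambda>j. {1..s-j}). t (fst p + snd p) (snd p))"
    by (rule sum.reindex_bij_witness[of _ "\<lambda>p. (fst p + snd p, snd p)" "\<lambda>p. (fst p - snd p, snd p)"])
       (use assms in auto)
  also have "\<dots> = (\<Sum>j\<le>s-1. \<Sum>k\<in>{1..s-j}. t (j + k) k)"
    by (simp add: sum.Sigma split_def)
  also have "\<dots> = binom_poly (s-1) (diff_coeffs s b h) x"
    unfolding binom_poly_def diff_coeffs_def t_def by (simp add: sum_distrib_right)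
  finally show ?thesis using e1 by simp
qed

lemma many_large_differences:
  fixes b :: "nat \<Rightarrow> real" and s N :: nat and \<delta> :: real
  assumes \<delta>0: "0 < \<delta>" and Nbig: "2 / \<delta>^2 \<le> real N"
    and hyp: "\<delta> * real N \<le> norm (\<Sum>n\<in>{1..N}. cis2pi (binom_poly (Suc s) b (real n)))"
  shows "\<exists>G \<subseteq> {1..<N}. \<delta>^2 * real N / 8 \<le> real (card G) \<and>
     (\<forall>h\<in>G. \<delta>^2 * real N / 8 \<le> real (N - h) \<and>
        \<delta>^2 / 8 * real (N - h) \<le> norm (\<Sum>m\<in>{1..N-h}. cis2pi (binom_poly s (diff_coeffs (Suc s) b h) (real m))))"
proof -
  define R where "R h = norm (\<Sum>m\<in>{1..N-h}. cis2pi (binom_poly s (diff_coeffs (Suc s) b h) (real m)))" for h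
  have Npos: "0 < real N" using Nbig \<delta>0 by (smt (verit) divide_pos_pos zero_less_power)
  have Rdef: "R h = norm (\<Sum>m\<in>{1..N-h}. cis2pi (binom_poly (Suc s) b (real (m+h)) - binom_poly (Suc s) b (real m)))" for h
    unfolding R_def using binom_poly_shift_diff[of "Suc s" b] by simp
  have Rle: "R h \<le> real (N - h)" for h
  proof -
    have "R h \<le> (\<Sum>m\<in>{1..N-h}. norm (cis2pi (binom_poly s (diff_coeffs (Suc s) b h) (real m))))" unfolding R_def by (rule norm_sum)
    also have "\<dots> = real (N - h)" by simp
    finally show ?thesis .
  qed
  have "(\<delta> * real N)^2 \<le> (norm (\<Sum>n\<in>{1..N}. cis2pi (binom_poly (Suc s) b (real n))))^2"
    using hyp \<delta>0 Npos by (intro power_mono) auto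
  also have "\<dots> \<le> real N + 2 * (\<Sum>h\<in>{1..<N}. R h)"
    unfolding Rdef using van_der_corput[of "\<lambda>n. binom_poly (Suc s) b (real n)" N] by simp
  finally have sq: "(\<delta> * real N)^2 \<le> real N + 2 * (\<Sum>h\<in>{1..<N}. R h)" .
  have "real N \<le> (\<delta> * real N)^2 / 2"
  proof -
    have "2 \<le> \<delta>^2 * real N" using Nbig \<delta>0 by (simp add: field_simps)
    then have "2 * real N \<le> \<delta>^2 * real N * real N" using Npos by (intro mult_right_mono[of 2 "\<delta>^2 * real N" "real N", simplified]) auto
    then show ?thesis by (simp add: power_mult_distrib power2_eq_square ac_simps)
  qed
  then have sumR: "\<delta>^2 * real N^2 / 4 \<le> (\<Sum>h\<in>{1..<N}. R h)" using sq by (simp add: power_mult_distrib)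
  define G where "G = {h\<in>{1..<N}. \<delta>^2 * real N / 8 \<le> R h}"
  have "(\<Sum>h\<in>{1..<N}. R h) = (\<Sum>h\<in>{1..<N} - G. R h) + (\<Sum>h\<in>G. R h)"
    by (rule sum.subset_diff) (auto simp: G_def)
  moreover have "(\<Sum>h\<in>{1..<N} - G. R h) \<le> real N * (\<delta>^2 * real N / 8)"
  proof -
    have "(\<Sum>h\<in>{1..<N} - G. R h) \<le> (\<Sum>h\<in>{1..<N} - G. \<delta>^2 * real N / 8)"
      by (rule sum_mono) (auto simp: G_def)
    also have "\<dots> = real (card ({1..<N} - G)) * (\<delta>^2 * real N / 8)" by simp
    also have "\<dots> \<le> real N * (\<delta>^2 * real N / 8)"
    proof (rule mult_right_mono)
      have "card ({1..<N} - G) \<le> card {1..<N}" by (rule card_mono) auto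
      then show "real (card ({1..<N} - G)) \<le> real N" by simp
    qed simp
    finally show ?thesis .
  qed
  moreover have e1: "real N * (\<delta>^2 * real N / 8) = \<delta>^2 * real N^2 / 8" by (simp add: power2_eq_square)
  ultimately have sumG: "\<delta>^2 * real N^2 / 8 \<le> (\<Sum>h\<in>G. R h)" using sumR by linarith
  have RN: "R h \<le> real N" for h using Rle[of h] by (smt (verit) of_nat_le_iff diff_le_self)
  have "(\<Sum>h\<in>G. R h) \<le> (\<Sum>h\<in>G. real N)" by (rule sum_mono) (rule RN)
  also have "\<dots> = real (card G) * real N" by simp
  finally have "\<delta>^2 * real N / 8 * real N \<le> real (card G) * real N" using sumG by (simp add: power2_eq_square)
  then have cG: "\<delta>^2 * real N / 8 \<le> real (card G)" using Npos by simp
  show ?thesis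
  proof (intro exI[of _ G] conjI ballI)
    show "G \<subseteq> {1..<N}" unfolding G_def by auto
    show "\<delta>^2 * real N / 8 \<le> real (card G)" by (rule cG)
  next
    fix h assume h: "h \<in> G"
    then have Rh: "\<delta>^2 * real N / 8 \<le> R h" unfolding G_def by auto
    then show "\<delta>^2 * real N / 8 \<le> real (N - h)" using Rle[of h] by linarith
    have "\<delta>^2 / 8 * real (N - h) \<le> \<delta>^2 / 8 * real N" by (intro mult_left_mono) auto
    then show "\<delta>^2 / 8 * real (N - h) \<le> norm (\<Sum>m\<in>{1..N-h}. cis2pi (binom_poly s (diff_coeffs (Suc s) b h) (real m)))"
      using Rh unfolding R_def by simp
  qed
qed

section \<open>Descent through the higher coefficients\<close>

primrec descent_bound :: "real \<Rightarrow> real \<Rightarrow> real \<Rightarrow> real \<Rightarrow> nat \<Rightarrow> real" where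
  "descent_bound c w A B 0 = 0"
| "descent_bound c w A B (Suc r) = c * descent_bound c w A B r + w * (c^r * A + B * descent_bound c w A B r)"

lemma descent_bound_nonneg: "0 \<le> c \<Longrightarrow> 0 \<le> w \<Longrightarrow> 0 \<le> A \<Longrightarrow> 0 \<le> B \<Longrightarrow> 0 \<le> descent_bound c w A B r"
  by (induction r) auto

lemma descent_bound_mono:
  assumes "1 \<le> c" "0 \<le> w" "0 \<le> A" "0 \<le> B" "r \<le> r'"
  shows "descent_bound c w A B r \<le> descent_bound c w A B r'"
  using assms(5)
proof (induction r' rule: dec_induct)
  case base then show ?case by simp
next
  case (step n)
  have e: "0 \<le> descent_bound c w A B n" using assms by (intro descent_bound_nonneg) auto
  have "descent_bound c w A B n \<le> c * descent_bound c w A B n" using e assms(1) by (simp add: mult_le_cancel_right1)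
  moreover have "0 \<le> w * (c^n * A + B * descent_bound c w A B n)" using assms e by simp
  ultimately show ?case using step by simp
qed

lemma choose_le_Npow: "h \<le> N \<Longrightarrow> real (h choose k) \<le> real N ^ k"
proof -
  assume hN: "h \<le> N"
  have "h choose k \<le> h ^ k" by (cases "k \<le> h") (auto intro: binomial_le_pow simp: binomial_eq_0)
  also have "\<dots> \<le> N ^ k" using hN by (simp add: power_mono)
  finally show ?thesis by (metis of_nat_le_iff of_nat_power)
qed

text \<open>Transfer from the differenced phase to the original one: the degree \<open>j\<close> coefficient of the
  differenced phase is \<open>b_{j+1} h + \<Sum>_{k\<ge>2} b_{j+k} (h choose k)\<close>, whose tail is controlled by
  the bounds already known for the higher coefficients.\<close>
lemma derived_coeff_transfer:
  fixes b :: "nat \<Rightarrow> real" and s r j m q0 Q1 N h :: nat and A E :: real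
  assumes j: "j = s - r" and rs: "r < s" and hN: "h \<le> N" and q0Q: "q0 \<le> Q1"
    and H: "real N ^ j * nint_dist (real q0 * diff_coeffs (Suc s) b h j) \<le> A"
    and IH: "\<forall>i. Suc s - r < i \<and> i \<le> Suc s \<longrightarrow> real N ^ i * nint_dist (real m * b i) \<le> E"
    and E0: "0 \<le> E"
  shows "real N ^ j * nint_dist (real m * real q0 * b (Suc j) * real h) \<le> real m * A + real s * real Q1 * E"
proof -
  have sj: "Suc s - j = Suc r" using j rs by simp
  define T where "T = (\<Sum>k\<in>{2..Suc r}. real (q0 * (h choose k)) * (real m * b (j+k)))"
  have "diff_coeffs (Suc s) b h j = (\<Sum>k\<in>{1..Suc r}. b (j+k) * real (h choose k))"
    unfolding diff_coeffs_def sj ..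
  also have "\<dots> = b (Suc j) * real h + (\<Sum>k\<in>{2..Suc r}. b (j+k) * real (h choose k))"
    by (simp add: sum.atLeast_Suc_atMost numeral_2_eq_2)
  finally have dc: "diff_coeffs (Suc s) b h j = b (Suc j) * real h + (\<Sum>k\<in>{2..Suc r}. b (j+k) * real (h choose k))" .
  have xeq: "real m * real q0 * b (Suc j) * real h = real m * (real q0 * diff_coeffs (Suc s) b h j) - T"
    unfolding dc T_def by (simp add: algebra_simps sum_distrib_left)
  have "nint_dist (real m * real q0 * b (Suc j) * real h) \<le> nint_dist (real m * (real q0 * diff_coeffs (Suc s) b h j)) + nint_dist T"
    unfolding xeq by (rule nint_dist_diff)
  also have "\<dots> \<le> real m * nint_dist (real q0 * diff_coeffs (Suc s) b h j) + (\<Sum>k\<in>{2..Suc r}. real (q0 * (h choose k)) * nint_dist (real m * b (j+k)))"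
  proof (rule add_mono)
    show "nint_dist (real m * (real q0 * diff_coeffs (Suc s) b h j)) \<le> real m * nint_dist (real q0 * diff_coeffs (Suc s) b h j)"
      by (rule nint_dist_mult_nat)
    have "nint_dist T \<le> (\<Sum>k\<in>{2..Suc r}. nint_dist (real (q0 * (h choose k)) * (real m * b (j+k))))"
      unfolding T_def by (rule nint_dist_sum) simp
    also have "\<dots> \<le> (\<Sum>k\<in>{2..Suc r}. real (q0 * (h choose k)) * nint_dist (real m * b (j+k)))"
      by (rule sum_mono) (rule nint_dist_mult_nat)
    finally show "nint_dist T \<le> (\<Sum>k\<in>{2..Suc r}. real (q0 * (h choose k)) * nint_dist (real m * b (j+k)))" .
  qed
  finally have nd1: "nint_dist (real m * real q0 * b (Suc j) * real h) \<le> real m * nint_dist (real q0 * diff_coeffs (Suc s) b h j) + (\<Sum>k\<in>{2..Suc r}. real (q0 * (h choose k)) * nint_dist (real m * b (j+k)))" .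
  have t1: "real N ^ j * (real m * nint_dist (real q0 * diff_coeffs (Suc s) b h j)) \<le> real m * A"
    using H by (simp add: mult.left_commute mult_left_mono)
  have t2: "real N ^ j * (real (q0 * (h choose k)) * nint_dist (real m * b (j+k))) \<le> real Q1 * E" if k: "k \<in> {2..Suc r}" for k
  proof -
    have ik: "Suc s - r < j + k \<and> j + k \<le> Suc s" using k j rs by auto
    have Ei: "real N ^ (j+k) * nint_dist (real m * b (j+k)) \<le> E" using IH ik by blast
    have "real N ^ j * (real (q0 * (h choose k)) * nint_dist (real m * b (j+k)))
        = real q0 * real (h choose k) * (real N ^ j * nint_dist (real m * b (j+k)))" by simp
    also have "\<dots> \<le> real Q1 * real N ^ k * (real N ^ j * nint_dist (real m * b (j+k)))"
      using q0Q choose_le_Npow[OF hN, of k] nint_dist_nonneg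
      by (intro mult_right_mono mult_mono) auto
    also have "\<dots> = real Q1 * (real N ^ (j+k) * nint_dist (real m * b (j+k)))" by (simp add: power_add)
    also have "\<dots> \<le> real Q1 * E" using Ei by (intro mult_left_mono) auto
    finally show ?thesis .
  qed
  have "real N ^ j * nint_dist (real m * real q0 * b (Suc j) * real h)
      \<le> real N ^ j * (real m * nint_dist (real q0 * diff_coeffs (Suc s) b h j) + (\<Sum>k\<in>{2..Suc r}. real (q0 * (h choose k)) * nint_dist (real m * b (j+k))))"
    using nd1 by (intro mult_left_mono) auto
  also have "\<dots> = real N ^ j * (real m * nint_dist (real q0 * diff_coeffs (Suc s) b h j)) + (\<Sum>k\<in>{2..Suc r}. real N ^ j * (real (q0 * (h choose k)) * nint_dist (real m * b (j+k))))"
    by (simp add: distrib_left sum_distrib_left)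
  also have "\<dots> \<le> real m * A + (\<Sum>k\<in>{2..Suc r}. real Q1 * E)"
    using t1 t2 by (intro add_mono sum_mono) auto
  also have "\<dots> = real m * A + real r * (real Q1 * E)" by simp
  also have "\<dots> \<le> real m * A + real s * real Q1 * E"
    using rs E0 by (simp add: mult_right_mono mult.assoc)
  finally show ?thesis .
qed

text \<open>Suppose \<open>m\<close> already controls the coefficients \<open>b_i\<close> for
  \<open>i > s + 1 - r\<close>.  For the many good shifts \<open>h\<close>, the coefficient of degree \<open>j = s - r\<close> of the
  differenced phase is \<open>b_{j+1} h\<close> up to controlled terms, so \<open>\<alpha> = m q0 b_{j+1}\<close> satisfies
  \<open>\<parallel>\<alpha> h\<parallel> \<le> \<eta>\<close> for these \<open>h\<close>; the Vinogradov-type lemma then yields \<open>q' \<le> 2/\<sigma>\<close> and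
  \<open>m' = q' q0 m\<close> controls \<open>b_{j+1}\<close> as well.\<close>
lemma descent_step:
  fixes b :: "nat \<Rightarrow> real" and s N Q1 q0 r m :: nat and \<sigma> A :: real and G0 :: "nat set"
  defines "c \<equiv> 2 * real Q1 / \<sigma>" and "w \<equiv> 32 / \<sigma>^2" and "B \<equiv> real s * real Q1"
  assumes \<sigma>0: "0 < \<sigma>" and \<sigma>1: "\<sigma> \<le> 1" and Q1: "1 \<le> Q1" and q0: "1 \<le> q0" "q0 \<le> Q1" and A0: "0 \<le> A"
    and G0: "G0 \<subseteq> {1..N}" "\<sigma> * real N \<le> real (card G0)"
    and H: "\<forall>h\<in>G0. \<forall>j\<in>{1..s}. real N ^ j * nint_dist (real q0 * diff_coeffs (Suc s) b h j) \<le> A"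
    and N16: "16 / \<sigma>^2 \<le> real N"
    and NB: "32 * (c^s * A + real s * real Q1 * descent_bound c w A B s) / \<sigma>^2 \<le> real N"
    and rs: "r < s"
    and m: "1 \<le> m" "real m \<le> c^r"
      "\<forall>i. Suc s - r < i \<and> i \<le> Suc s \<longrightarrow> real N ^ i * nint_dist (real m * b i) \<le> descent_bound c w A B r"
  shows "\<exists>m'::nat. 1 \<le> m' \<and> real m' \<le> c^Suc r \<and>
     (\<forall>i. Suc s - Suc r < i \<and> i \<le> Suc s \<longrightarrow> real N ^ i * nint_dist (real m' * b i) \<le> descent_bound c w A B (Suc r))"
proof -
  have c1: "1 \<le> c" unfolding c_def using \<sigma>0 \<sigma>1 Q1 by (simp add: field_simps)
  have w0: "0 \<le> w" unfolding w_def by simp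
  have B0: "0 \<le> B" unfolding B_def by simp
  define E where "E = descent_bound c w A B r"
  have E0: "0 \<le> E" unfolding E_def using c1 w0 A0 B0 by (intro descent_bound_nonneg) auto
  define j where "j = s - r"
  have j1: "1 \<le> j" "j \<le> s" unfolding j_def using rs by auto
  define \<alpha> where "\<alpha> = real m * real q0 * b (Suc j)"
  define Bv where "Bv = c^r * A + real s * real Q1 * E"
  have est: "real N ^ j * nint_dist (\<alpha> * real h) \<le> Bv" if h: "h \<in> G0" for h
  proof -
    have hN: "h \<le> N" using h G0 by auto
    have Hh: "real N ^ j * nint_dist (real q0 * diff_coeffs (Suc s) b h j) \<le> A" using H h j1 by auto
    have "real N ^ j * nint_dist (\<alpha> * real h) \<le> real m * A + real s * real Q1 * E"
      unfolding \<alpha>_def E_def using derived_coeff_transfer[OF j_def rs hN q0(2) Hh m(3)] E0 unfolding E_def by simp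
    also have "\<dots> \<le> Bv" unfolding Bv_def using m(2) A0 by (simp add: mult_right_mono)
    finally show ?thesis .
  qed
  have Bv0: "0 \<le> Bv" unfolding Bv_def using c1 A0 E0 by simp
  have "Bv \<le> c^s * A + real s * real Q1 * descent_bound c w A B s"
  proof -
    have "c^r \<le> c^s" using c1 rs by (simp add: power_increasing)
    moreover have "E \<le> descent_bound c w A B s" unfolding E_def using c1 w0 A0 B0 rs by (intro descent_bound_mono) auto
    ultimately show ?thesis unfolding Bv_def using A0 E0 c1 by (intro add_mono mult_mono mult_left_mono) auto
  qed
  then have "32 * Bv / \<sigma>^2 \<le> real N" using NB \<sigma>0 by (smt (verit) divide_right_mono zero_le_power2)
  then obtain q' where q': "1 \<le> q'" "real q' \<le> 2/\<sigma>" "real N ^ Suc j * nint_dist (real q' * \<alpha>) \<le> w * Bv"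
    using vinogradov_scaled[OF \<sigma>0 G0 N16 j1(1) Bv0 _ est] unfolding w_def by (auto simp: field_simps)
  define m' where "m' = q' * q0 * m"
  have m'1: "1 \<le> m'" unfolding m'_def using q' q0 m by simp
  have m'b: "real m' \<le> c^Suc r"
  proof -
    have "real m' = real q' * real q0 * real m" unfolding m'_def by simp
    also have "\<dots> \<le> (2/\<sigma>) * real Q1 * c^r" using q' q0 m \<sigma>0 by (intro mult_mono) auto
    also have "\<dots> = c^Suc r" unfolding c_def by simp
    finally show ?thesis .
  qed
  have ESuc: "descent_bound c w A B (Suc r) = c * E + w * Bv" unfolding E_def Bv_def B_def by simp
  have new: "real N ^ i * nint_dist (real m' * b i) \<le> descent_bound c w A B (Suc r)"
    if i: "Suc s - Suc r < i" "i \<le> Suc s" for i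
  proof (cases "i = Suc j")
    case True
    have "real m' * b i = real q' * \<alpha>" unfolding m'_def \<alpha>_def True by simp
    then have "real N ^ i * nint_dist (real m' * b i) \<le> w * Bv" using True q'(3) by simp
    also have "\<dots> \<le> descent_bound c w A B (Suc r)" unfolding ESuc using c1 E0 by simp
    finally show ?thesis .
  next
    case False
    then have ii: "Suc s - r < i" using i j_def rs by auto
    have eqm: "real m' * b i = real (q' * q0) * (real m * b i)" unfolding m'_def by simp
    have "nint_dist (real m' * b i) \<le> real (q' * q0) * nint_dist (real m * b i)"
      unfolding eqm by (rule nint_dist_mult_nat)
    then have "real N ^ i * nint_dist (real m' * b i) \<le> real (q' * q0) * (real N ^ i * nint_dist (real m * b i))"
      by (simp add: mult_left_mono mult.left_commute)
    also have "\<dots> \<le> real (q' * q0) * E" using m(3) ii i unfolding E_def by (intro mult_left_mono) auto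
    also have "\<dots> \<le> c * E"
    proof (rule mult_right_mono[OF _ E0])
      have "real (q' * q0) = real q' * real q0" by simp
      also have "\<dots> \<le> (2/\<sigma>) * real Q1" using q' q0 \<sigma>0 by (intro mult_mono) auto
      finally show "real (q' * q0) \<le> c" unfolding c_def by simp
    qed
    also have "\<dots> \<le> descent_bound c w A B (Suc r)" unfolding ESuc using w0 Bv0 by simp
    finally show ?thesis .
  qed
  show ?thesis using m'1 m'b new by blast
qed

lemma descent:
  fixes b :: "nat \<Rightarrow> real" and s N Q1 q0 r :: nat and \<sigma> A :: real and G0 :: "nat set"
  defines "c \<equiv> 2 * real Q1 / \<sigma>" and "w \<equiv> 32 / \<sigma>^2" and "B \<equiv> real s * real Q1"
  assumes \<sigma>0: "0 < \<sigma>" and \<sigma>1: "\<sigma> \<le> 1" and Q1: "1 \<le> Q1" and q0: "1 \<le> q0" "q0 \<le> Q1" and A0: "0 \<le> A"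
    and G0: "G0 \<subseteq> {1..N}" "\<sigma> * real N \<le> real (card G0)"
    and H: "\<forall>h\<in>G0. \<forall>j\<in>{1..s}. real N ^ j * nint_dist (real q0 * diff_coeffs (Suc s) b h j) \<le> A"
    and N16: "16 / \<sigma>^2 \<le> real N"
    and NB: "32 * (c^s * A + real s * real Q1 * descent_bound c w A B s) / \<sigma>^2 \<le> real N"
    and rs: "r \<le> s"
  shows "\<exists>m::nat. 1 \<le> m \<and> real m \<le> c^r \<and>
     (\<forall>i. Suc s - r < i \<and> i \<le> Suc s \<longrightarrow> real N ^ i * nint_dist (real m * b i) \<le> descent_bound c w A B r)"
  using rs
proof (induction r)
  case 0
  show ?case by (intro exI[of _ 1]) auto
next
  case (Suc r)
  then obtain m where "1 \<le> m" "real m \<le> c^r"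
    "\<forall>i. Suc s - r < i \<and> i \<le> Suc s \<longrightarrow> real N ^ i * nint_dist (real m * b i) \<le> descent_bound c w A B r"
    by auto
  then show ?case
    using descent_step[OF \<sigma>0 \<sigma>1 Q1 q0 A0 G0 H N16 NB[unfolded c_def w_def B_def]] Suc.prems
    unfolding c_def w_def B_def by auto
qed

section \<open>The linear coefficient\<close>

text \<open>Binomial coefficients along progressions of difference \<open>m s!\<close>: for \<open>1 \<le> k \<le> s\<close> the number
  \<open>m s!\<close> choose \<open>k\<close> is divisible by \<open>m\<close>, hence by Vandermonde \<open>(n + m s! u) choose i \<equiv> n choose i\<close>
  modulo \<open>m\<close> for \<open>i \<le> s\<close>.\<close>
lemma dvd_choose_mult_fact:
  assumes "1 \<le> k" "k \<le> s"
  shows "m dvd ((m * fact s) choose k)"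
proof (cases "m = 0")
  case True then show ?thesis using assms by simp
next
  case False
  define D where "D = m * fact s"
  have D1: "1 \<le> D" using False unfolding D_def by (simp add: Suc_le_eq)
  obtain k' where k': "k = Suc k'" using assms by (cases k) auto
  obtain n where n: "D = Suc n" using D1 by (cases D) auto
  have "k * (D choose k) = D * (n choose k')" unfolding k' n by (rule Suc_times_binomial)
  moreover obtain w where w: "fact s = k * w" using dvd_fact[OF assms] by (metis dvdE)
  ultimately have "k * (D choose k) = k * (m * w * (n choose k'))" unfolding D_def by (simp add: ac_simps)
  then have "D choose k = m * (w * (n choose k'))" using assms by simp
  then show ?thesis unfolding D_def by simp
qed

lemma choose_shift:
  assumes "i \<le> s"
  shows "\<exists>W. (n + m * fact s * u) choose i = (n choose i) + m * W"
proof (induction u)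
  case 0 then show ?case by simp
next
  case (Suc u)
  then obtain W where W: "(n + m * fact s * u) choose i = (n choose i) + m * W" by auto
  define n' where "n' = n + m * fact s * u"
  have "(n' + m * fact s) choose i = (\<Sum>k=0..i. ((m * fact s) choose k) * (n' choose (i - k)))"
    using binomial_Vandermonde[of "m * fact s" n' i] by (simp add: add.commute)
  also have "\<dots> = (n' choose i) + (\<Sum>k\<in>{1..i}. ((m * fact s) choose k) * (n' choose (i - k)))"
    by (simp add: sum.atLeast_Suc_atMost)
  finally have e: "(n' + m * fact s) choose i = (n' choose i) + (\<Sum>k\<in>{1..i}. ((m * fact s) choose k) * (n' choose (i - k)))" .
  have "m dvd (\<Sum>k\<in>{1..i}. ((m * fact s) choose k) * (n' choose (i - k)))"
    using assms by (intro dvd_sum) (auto intro!: dvd_mult2 dvd_choose_mult_fact)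
  then obtain W2 where "(\<Sum>k\<in>{1..i}. ((m * fact s) choose k) * (n' choose (i - k))) = m * W2" by (metis dvdE)
  then have "(n' + m * fact s) choose i = (n choose i) + m * (W + W2)"
    using e W unfolding n'_def by (simp add: algebra_simps)
  moreover have "n + m * fact s * Suc u = n' + m * fact s" unfolding n'_def by simp
  ultimately show ?case by metis
qed

lemma choose_diff_bound:
  assumes "1 \<le> i" "n + d \<le> N"
  shows "0 \<le> real ((n + d) choose i) - real (n choose i) \<and>
         real ((n + d) choose i) - real (n choose i) \<le> real d * real N ^ (i - 1)"
  using assms
proof (induction d)
  case 0 then show ?case by simp
next
  case (Suc d)
  obtain i' where i': "i = Suc i'" using Suc.prems by (cases i) auto
  have step: "(n + Suc d) choose i = ((n + d) choose i) + ((n + d) choose i')"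
    using i' by (simp add: binomial_Suc_Suc)
  have IH: "0 \<le> real ((n + d) choose i) - real (n choose i) \<and>
         real ((n + d) choose i) - real (n choose i) \<le> real d * real N ^ (i - 1)"
    using Suc by simp
  have "(n + d) choose i' \<le> (n + d) ^ i'"
    by (cases "i' \<le> n + d") (auto intro: binomial_le_pow simp: binomial_eq_0)
  also have "\<dots> \<le> N ^ i'" using Suc.prems by (simp add: power_mono)
  finally have bnd: "real ((n + d) choose i') \<le> real N ^ i'" by (metis of_nat_le_iff of_nat_power)
  have r: "real ((n + Suc d) choose i) = real ((n + d) choose i) + real ((n + d) choose i')"
    using step by simp
  have "real (Suc d) * real N ^ (i-1) = real d * real N^(i-1) + real N ^ i'" using i' by (simp add: algebra_simps)
  then show ?case using IH r bnd by linarith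
qed


lemma binom_poly_split: "binom_poly (Suc s) b x = b 0 + b 1 * x + (\<Sum>i\<in>{2..Suc s}. b i * (x gchoose i))"
proof -
  have "binom_poly (Suc s) b x = (\<Sum>i\<in>{0..Suc s}. b i * (x gchoose i))" unfolding binom_poly_def by (simp add: atMost_atLeast0)
  also have "\<dots> = b 0 * (x gchoose 0) + (b 1 * (x gchoose 1) + (\<Sum>i\<in>{2..Suc s}. b i * (x gchoose i)))"
    by (simp add: sum.atLeast_Suc_atMost numeral_2_eq_2)
  finally show ?thesis by simp
qed

text \<open>On the progression \<open>n0 + m (s+1)! d\<close> a phase of degree \<open>s+1\<close> is linear modulo \<open>1\<close> up to the
  error term coming from the fractional parts of \<open>m b_i\<close>, \<open>i \<ge> 2\<close>.\<close>
lemma phase_decomp: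
  fixes b :: "nat \<Rightarrow> real" and s m n0 d :: nat
  assumes m1: "1 \<le> m"
  defines "n1 \<equiv> n0 + m * fact (Suc s) * d"
  shows "\<exists>z::int. binom_poly (Suc s) b (real n1) = binom_poly (Suc s) b (real n0) + b 1 * real (m * fact (Suc s) * d) + of_int z
     + (\<Sum>i\<in>{2..Suc s}. (real m * b i - of_int (round (real m * b i))) / real m * (real (n1 choose i) - real (n0 choose i)))"
proof -
  define e where "e i = real m * b i - of_int (round (real m * b i))" for i
  have "\<forall>i\<in>{2..Suc s}. \<exists>W. n1 choose i = (n0 choose i) + m * W"
    unfolding n1_def using choose_shift[of _ "Suc s" n0 m d] by (auto simp del: fact_Suc)
  then obtain W where W: "\<forall>i\<in>{2..Suc s}. n1 choose i = (n0 choose i) + m * W i" by metis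
  have mpos: "0 < real m" using m1 by simp
  have trm: "b i * (real (n1 choose i) - real (n0 choose i)) = of_int (round (real m * b i) * int (W i))
      + e i / real m * (real (n1 choose i) - real (n0 choose i))" if i: "i \<in> {2..Suc s}" for i
  proof -
    have "real (n1 choose i) - real (n0 choose i) = real m * real (W i)" using W i by simp
    then show ?thesis unfolding e_def using mpos by (simp add: field_simps)
  qed
  have "binom_poly (Suc s) b (real n1) - binom_poly (Suc s) b (real n0) = b 1 * (real n1 - real n0)
        + (\<Sum>i\<in>{2..Suc s}. b i * (real (n1 choose i) - real (n0 choose i)))"
    by (simp add: binom_poly_split gchoose_nat sum_subtractf right_diff_distrib algebra_simps)
  also have "(\<Sum>i\<in>{2..Suc s}. b i * (real (n1 choose i) - real (n0 choose i)))
     = of_int (\<Sum>i\<in>{2..Suc s}. round (real m * b i) * int (W i)) + (\<Sum>i\<in>{2..Suc s}. e i / real m * (real (n1 choose i) - real (n0 choose i)))"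
    using trm by (simp add: sum.distrib)
  finally show ?thesis unfolding e_def n1_def by (intro exI[of _ "\<Sum>i\<in>{2..Suc s}. round (real m * b i) * int (W i)"]) (simp add: algebra_simps)
qed

lemma psi_term_bound:
  fixes bi \<Delta> E :: real and m i N K dd :: nat
  assumes m1: "1 \<le> m" and i1: "1 \<le> i" and Eb: "real N ^ i * nint_dist (real m * bi) \<le> E"
    and D0: "0 \<le> \<Delta>" and D1: "\<Delta> \<le> real dd * real N ^ (i-1)" and dK: "real dd * real K \<le> real N"
    and K1: "1 \<le> K"
  shows "\<bar>(real m * bi - of_int (round (real m * bi))) / real m * \<Delta>\<bar> \<le> E / real K"
proof -
  define \<epsilon> where "\<epsilon> = nint_dist (real m * bi)"
  have e0: "0 \<le> \<epsilon>" unfolding \<epsilon>_def by (rule nint_dist_nonneg)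
  have "\<bar>(real m * bi - of_int (round (real m * bi))) / real m * \<Delta>\<bar> = \<epsilon> / real m * \<Delta>"
    unfolding \<epsilon>_def nint_dist_def using D0 m1 by (simp add: abs_mult)
  also have "\<dots> \<le> \<epsilon> * \<Delta>" using m1 e0 D0 by (simp add: divide_le_eq mult_le_cancel_left1 field_simps mult_left_mono mult_right_mono)
  also have "\<dots> \<le> \<epsilon> * (real dd * real N ^ (i-1))" using D1 e0 by (rule mult_left_mono)
  also have "\<dots> \<le> E / real K"
  proof -
    have "\<epsilon> * (real dd * real N ^ (i-1)) * real K = \<epsilon> * real N ^ (i-1) * (real dd * real K)" by simp
    also have "\<dots> \<le> \<epsilon> * real N ^ (i-1) * real N" using dK e0 by (intro mult_left_mono) auto
    also have "\<dots> = real N ^ i * \<epsilon>" using i1 by (cases i) auto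
    also have "\<dots> \<le> E" using Eb unfolding \<epsilon>_def .
    finally show ?thesis using K1 by (simp add: field_simps)
  qed
  finally show ?thesis .
qed

lemma near_linear_on_progression:
  fixes b :: "nat \<Rightarrow> real" and s m n0 t N K :: nat and E :: real
  defines "D \<equiv> m * fact (Suc s)"
  assumes m1: "1 \<le> m" and K1: "1 \<le> K"
    and Eb: "\<forall>i\<in>{2..Suc s}. real N ^ i * nint_dist (real m * b i) \<le> E"
    and tN: "n0 + D * t \<le> N" and tK: "D * t * K \<le> N"
  shows "\<exists>\<psi>. \<bar>\<psi>\<bar> \<le> real s * E / real K \<and> (\<exists>z::int.
    binom_poly (Suc s) b (real (n0 + D * t)) = binom_poly (Suc s) b (real n0) + b 1 * real D * real t + \<psi> + of_int z)"
proof -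
  define \<psi> where "\<psi> = (\<Sum>i\<in>{2..Suc s}. (real m * b i - of_int (round (real m * b i))) / real m
      * (real ((n0 + D*t) choose i) - real (n0 choose i)))"
  obtain z :: int where z: "binom_poly (Suc s) b (real (n0 + D * t)) = binom_poly (Suc s) b (real n0)
      + b 1 * real (D * t) + of_int z + \<psi>"
    using phase_decomp[OF m1, of s b n0 t] unfolding \<psi>_def D_def by (auto simp: mult.assoc)
  have "\<bar>\<psi>\<bar> \<le> (\<Sum>i\<in>{2..Suc s}. E / real K)"
    unfolding \<psi>_def
  proof (rule order_trans[OF sum_abs sum_mono])
    fix i assume i: "i \<in> {2..Suc s}"
    have cb: "0 \<le> real ((n0 + D*t) choose i) - real (n0 choose i) \<and>
       real ((n0 + D*t) choose i) - real (n0 choose i) \<le> real (D*t) * real N ^ (i - 1)"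
      using choose_diff_bound[of i n0 "D*t" N] i tN by simp
    have dK: "real (D*t) * real K \<le> real N" using tK by (metis of_nat_le_iff of_nat_mult)
    have "real N ^ i * nint_dist (real m * b i) \<le> E" using Eb i by blast
    from psi_term_bound[OF m1 _ this conjunct1[OF cb] conjunct2[OF cb] dK K1] i
    show "\<bar>(real m * b i - of_int (round (real m * b i))) / real m * (real ((n0 + D*t) choose i) - real (n0 choose i))\<bar> \<le> E / real K"
      by simp
  qed
  then have "\<bar>\<psi>\<bar> \<le> real s * E / real K" by simp
  moreover have "b 1 * real (D * t) = b 1 * real D * real t" by simp
  ultimately show ?thesis using z by (intro exI[of _ \<psi>]) (auto intro!: exI[of _ z])
qed

lemma convex_ivl:
  fixes J :: "nat set"
  assumes "finite J" "\<And>a b c. a \<in> J \<Longrightarrow> c \<in> J \<Longrightarrow> a \<le> b \<Longrightarrow> b \<le> c \<Longrightarrow> b \<in> J"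
  shows "\<exists>u v. J = {u..<v}"
proof (cases "J = {}")
  case True then show ?thesis by (intro exI[of _ 0]) auto
next
  case False
  have "J = {Min J..<Suc (Max J)}"
  proof
    show "J \<subseteq> {Min J..<Suc (Max J)}"
    proof
      fix b assume b: "b \<in> J"
      have "Min J \<le> b" using assms(1) b by (rule Min_le)
      moreover have "b \<le> Max J" using assms(1) b by (rule Max_ge)
      ultimately show "b \<in> {Min J..<Suc (Max J)}" by simp
    qed
    show "{Min J..<Suc (Max J)} \<subseteq> J"
    proof
      fix b assume "b \<in> {Min J..<Suc (Max J)}"
      then have "Min J \<le> b" "b \<le> Max J" by auto
      moreover have "Min J \<in> J" "Max J \<in> J" using assms(1) False by auto
      ultimately show "b \<in> J" using assms(2) by blast
    qed
  qed
  then show ?thesis by blast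
qed




text \<open>Every \<open>n \<in> [N]\<close> is covered by exactly \<open>L\<close> of the windows \<open>{y + D t - D L : t < L}\<close>,
  \<open>1 \<le> y \<le> N + D L\<close>; summing over the windows therefore counts \<open>\<Sum>_{n\<le>N} f n\<close> exactly \<open>L\<close> times.\<close>
lemma reidx_shift:
  fixes a c N :: nat
  assumes "a < c"
  shows "(\<Sum>y\<in>{y\<in>{1..N+c}. c < y + a \<and> y + a \<le> N + c}. f (y + a - c)) = (\<Sum>n\<in>{1..N}. f n)"
  by (rule sum.reindex_bij_witness[of _ "\<lambda>n. n + c - a" "\<lambda>y. y + a - c"]) (use assms in auto)

lemma avg_identity:
  fixes f :: "nat \<Rightarrow> complex" and D L N :: nat
  assumes "1 \<le> D"
  shows "(\<Sum>y\<in>{1..N + D*L}. \<Sum>t\<in>{t\<in>{..<L}. D*L < y + D*t \<and> y + D*t \<le> N + D*L}. f (y + D*t - D*L))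
         = of_nat L * (\<Sum>n\<in>{1..N}. f n)"
proof -
  have "(\<Sum>y\<in>{1..N + D*L}. \<Sum>t\<in>{t\<in>{..<L}. D*L < y + D*t \<and> y + D*t \<le> N + D*L}. f (y + D*t - D*L))
      = (\<Sum>y\<in>{1..N + D*L}. \<Sum>t\<in>{..<L}. if D*L < y + D*t \<and> y + D*t \<le> N + D*L then f (y + D*t - D*L) else 0)"
    by (rule sum.cong[OF refl], rule sum.inter_filter) simp
  also have "\<dots> = (\<Sum>t\<in>{..<L}. \<Sum>y\<in>{1..N + D*L}. if D*L < y + D*t \<and> y + D*t \<le> N + D*L then f (y + D*t - D*L) else 0)"
    by (rule sum.swap)
  also have "\<dots> = (\<Sum>t\<in>{..<L}. \<Sum>y\<in>{y\<in>{1..N + D*L}. D*L < y + D*t \<and> y + D*t \<le> N + D*L}. f (y + D*t - D*L))"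
    by (rule sum.cong[OF refl], rule sum.inter_filter[symmetric]) simp
  also have "\<dots> = (\<Sum>t\<in>{..<L}. \<Sum>n\<in>{1..N}. f n)"
  proof (rule sum.cong[OF refl])
    fix t assume "t \<in> {..<L}"
    then have tl: "D * t < D * L" using assms by simp
    show "(\<Sum>y\<in>{y\<in>{1..N + D*L}. D*L < y + D*t \<and> y + D*t \<le> N + D*L}. f (y + D*t - D*L)) = (\<Sum>n\<in>{1..N}. f n)"
      by (rule reidx_shift[OF tl])
  qed
  also have "\<dots> = of_nat L * (\<Sum>n\<in>{1..N}. f n)" by simp
  finally show ?thesis .
qed

text \<open>Averaging: if \<open>|\<Sum>_{n\<le>N} f n| \<ge> \<delta> N\<close>, then some progression \<open>n0 + D t\<close>, \<open>t < len \<le> L\<close>,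
  inside \<open>[0, N]\<close> carries a sum of size \<open>\<ge> \<delta> L / 2\<close>, since each window meets \<open>[N]\<close> in a progression.\<close>
lemma large_progression_sum:
  fixes f :: "nat \<Rightarrow> complex" and D L N :: nat and \<delta> :: real
  assumes \<delta>0: "0 < \<delta>" and D1: "1 \<le> D" and L1: "1 \<le> L" and DLN: "D * L \<le> N"
    and hyp: "\<delta> * real N \<le> norm (\<Sum>n\<in>{1..N}. f n)"
  shows "\<exists>n0 len. len \<le> L \<and> (\<forall>t<len. n0 + D * t \<le> N) \<and> \<delta> * real L / 2 \<le> norm (\<Sum>t<len. f (n0 + D * t))"
proof -
  define J where "J y = {t\<in>{..<L}. D*L < y + D*t \<and> y + D*t \<le> N + D*L}" for y
  define g where "g y = (\<Sum>t\<in>J y. f (y + D*t - D*L))" for y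
  have "1 \<le> D * L" using D1 L1 by simp
  then have N1: "1 \<le> N" using DLN by linarith
  have DLNr: "real D * real L \<le> real N" using DLN by (metis of_nat_le_iff of_nat_mult)
  have avg: "(\<Sum>y\<in>{1..N + D*L}. g y) = of_nat L * (\<Sum>n\<in>{1..N}. f n)"
    unfolding g_def J_def using avg_identity[OF D1] by simp
  have "\<exists>y\<in>{1..N + D*L}. \<delta> * real L / 2 \<le> norm (g y)"
  proof (rule ccontr)
    assume "\<not> ?thesis"
    then have lt: "\<forall>y\<in>{1..N + D*L}. norm (g y) < \<delta> * real L / 2" by auto
    have "(\<Sum>y\<in>{1..N + D*L}. norm (g y)) < (\<Sum>y\<in>{1..N + D*L}. \<delta> * real L / 2)"
      by (rule sum_strict_mono) (use lt N1 in auto)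
    also have "\<dots> = real (N + D*L) * (\<delta> * real L / 2)" by simp
    also have "\<dots> \<le> real (2 * N) * (\<delta> * real L / 2)" using DLNr \<delta>0 by (intro mult_right_mono) auto
    also have "\<dots> = real L * (\<delta> * real N)" by simp
    also have "\<dots> \<le> real L * norm (\<Sum>n\<in>{1..N}. f n)" using hyp by (intro mult_left_mono) auto
    also have "\<dots> = norm (\<Sum>y\<in>{1..N + D*L}. g y)" unfolding avg by (simp add: norm_mult)
    also have "\<dots> \<le> (\<Sum>y\<in>{1..N + D*L}. norm (g y))" by (rule norm_sum)
    finally show False by simp
  qed
  then obtain y where ybig: "\<delta> * real L / 2 \<le> norm (g y)" by blast
  have "\<exists>u v. J y = {u..<v}"
  proof (rule convex_ivl)
    show "finite (J y)" unfolding J_def by simp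
    fix p q r assume pr: "p \<in> J y" "r \<in> J y" and pqr: "p \<le> q" "q \<le> r"
    have "D * p \<le> D * q" "D * q \<le> D * r" using pqr by auto
    moreover have "D*L < y + D*p" "y + D*r \<le> N + D*L" "r < L" using pr unfolding J_def by auto
    ultimately have "q < L" "D*L < y + D*q" "y + D*q \<le> N + D*L" using pqr by linarith+
    then show "q \<in> J y" unfolding J_def by simp
  qed
  then obtain u v where Juv: "J y = {u..<v}" by blast
  have "0 < \<delta> * real L" using \<delta>0 L1 by simp
  then have "J y \<noteq> {}" using ybig unfolding g_def by auto
  then have uv: "u < v" using Juv by auto
  have inJ: "t + u \<in> J y" if "t < v - u" for t using that Juv by auto
  have "v - 1 \<in> J y" using Juv uv by auto
  then have vL: "v - u \<le> L" unfolding J_def by auto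
  define n0 where "n0 = y + D*u - D*L"
  have shift: "y + D*(t + u) - D*L = n0 + D*t" if "t < v - u" for t
    using inJ[of 0] inJ[OF that] uv unfolding n0_def J_def by (auto simp: algebra_simps)
  have "g y = (\<Sum>t\<in>{0+u..<(v-u)+u}. f (y + D*t - D*L))" unfolding g_def Juv using uv by simp
  also have "\<dots> = (\<Sum>t<v-u. f (n0 + D*t))"
    unfolding sum.shift_bounds_nat_ivl lessThan_atLeast0 by (rule sum.cong) (auto simp: shift add.commute)
  finally have "g y = (\<Sum>t<v-u. f (n0 + D*t))" .
  moreover have "n0 + D*t \<le> N" if "t < v - u" for t
    using shift[OF that] inJ[OF that] unfolding J_def by auto
  ultimately show ?thesis using ybig vL by (intro exI[of _ n0] exI[of _ "v - u"]) auto
qed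

lemma perturbed_geometric_sum:
  fixes \<beta> \<epsilon> :: real and \<psi> :: "nat \<Rightarrow> real" and len :: nat
  assumes err: "\<And>t. t \<in> {..<len} \<Longrightarrow> norm (cis2pi (\<psi> t) - 1) \<le> \<epsilon>"
  shows "norm (\<Sum>t<len. cis2pi (\<beta> * real t) * cis2pi (\<psi> t))
    \<le> norm (\<Sum>t<len. cis2pi (\<beta> * real t)) + real len * \<epsilon>"
proof -
  have split: "(\<Sum>t<len. cis2pi (\<beta> * real t) * cis2pi (\<psi> t)) =
     (\<Sum>t<len. cis2pi (\<beta> * real t)) + (\<Sum>t<len. cis2pi (\<beta> * real t) * (cis2pi (\<psi> t) - 1))"
    by (simp add: sum.distrib[symmetric] algebra_simps)
  have "norm (\<Sum>t<len. cis2pi (\<beta> * real t) * (cis2pi (\<psi> t) - 1)) \<le> (\<Sum>t<len. norm (cis2pi (\<psi> t) - 1))"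
    using norm_sum[of "\<lambda>t. cis2pi (\<beta> * real t) * (cis2pi (\<psi> t) - 1)" "{..<len}"] by (simp add: norm_mult)
  also have "\<dots> \<le> (\<Sum>t<len. \<epsilon>)" by (rule sum_mono[OF err])
  finally have rest: "norm (\<Sum>t<len. cis2pi (\<beta> * real t) * (cis2pi (\<psi> t) - 1)) \<le> real len * \<epsilon>" by simp
  show ?thesis unfolding split
    using rest norm_triangle_ineq[of "\<Sum>t<len. cis2pi (\<beta> * real t)" "\<Sum>t<len. cis2pi (\<beta> * real t) * (cis2pi (\<psi> t) - 1)"]
    by linarith
qed

text \<open>Once \<open>m\<close> controls \<open>b_2, ..., b_{s+1}\<close>, the phase is nearly linear with
  slope \<open>\<beta> = D b_1\<close> on the progression found by averaging; there the Weyl sum is essentially the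
  geometric sum \<open>\<Sum> e(\<beta> t)\<close>, which can only be large when \<open>\<parallel>\<beta>\<parallel>\<close> is small.\<close>
lemma linear_coeff_bound:
  fixes b :: "nat \<Rightarrow> real" and s m N K :: nat and E \<delta> :: real
  defines "D \<equiv> m * fact (Suc s)"
  assumes \<delta>0: "0 < \<delta>" and m1: "1 \<le> m"
    and hyp: "\<delta> * real N \<le> norm (\<Sum>n\<in>{1..N}. cis2pi (binom_poly (Suc s) b (real n)))"
    and Eb: "\<forall>i\<in>{2..Suc s}. real N ^ i * nint_dist (real m * b i) \<le> E"
    and K1: "1 \<le> K" and KE: "2 * pi * real s * E \<le> \<delta> * real K / 4"
    and NK: "2 * (D * K) \<le> N"
  shows "real N * nint_dist (real D * b 1) \<le> 16 * real D * real K / \<delta>"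
proof -
  have D1: "1 \<le> D" unfolding D_def using m1 by (simp add: Suc_le_eq)
  define L where "L = N div (D * K)"
  have DK1: "1 \<le> D * K" using D1 K1 by simp
  have "2 \<le> L" unfolding L_def using div_le_mono[OF NK, of "D * K"] DK1 by simp
  then have L1: "1 \<le> L" by simp
  have DKL: "D * K * L \<le> N" unfolding L_def by (metis div_times_less_eq_dividend mult.commute)
  have "N = D * K * L + N mod (D * K)" unfolding L_def by simp
  moreover have "N mod (D * K) < D * K" using DK1 by simp
  moreover have "D * K \<le> D * K * L" using L1 by simp
  ultimately have "N \<le> 2 * (D * K * L)" by linarith
  then have Nle: "real N \<le> 2 * real D * real K * real L"
    by (metis of_nat_le_iff of_nat_mult of_nat_numeral mult.assoc)
  have DLN: "D * L \<le> N" using DKL K1 by (metis le_trans mult.commute mult_le_mono2 mult.assoc nat_mult_1_right)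
  define f where "f n = cis2pi (binom_poly (Suc s) b (real n))" for n
  obtain n0 len where prog: "len \<le> L" "\<forall>t<len. n0 + D * t \<le> N"
    and big: "\<delta> * real L / 2 \<le> norm (\<Sum>t<len. f (n0 + D * t))"
    using large_progression_sum[OF \<delta>0 D1 L1 DLN hyp[folded f_def]] by blast
  define \<beta> where "\<beta> = b 1 * real D"
  have "\<forall>t\<in>{..<len}. \<exists>\<psi>. \<bar>\<psi>\<bar> \<le> real s * E / real K \<and> (\<exists>z::int.
      binom_poly (Suc s) b (real (n0 + D * t)) = binom_poly (Suc s) b (real n0) + \<beta> * real t + \<psi> + of_int z)"
  proof
    fix t assume t: "t \<in> {..<len}"
    have "D * t * K \<le> D * L * K" using t prog(1) by simp
    also have "\<dots> \<le> N" using DKL by (simp add: ac_simps)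
    finally show "\<exists>\<psi>. \<bar>\<psi>\<bar> \<le> real s * E / real K \<and> (\<exists>z::int.
      binom_poly (Suc s) b (real (n0 + D * t)) = binom_poly (Suc s) b (real n0) + \<beta> * real t + \<psi> + of_int z)"
      using near_linear_on_progression[OF m1 K1 Eb, of n0 t] prog(2) t unfolding D_def \<beta>_def by auto
  qed
  then have "\<exists>\<psi>. \<forall>t\<in>{..<len}. \<bar>\<psi> t\<bar> \<le> real s * E / real K \<and> (\<exists>z::int.
      binom_poly (Suc s) b (real (n0 + D * t)) = binom_poly (Suc s) b (real n0) + \<beta> * real t + \<psi> t + of_int z)"
    by (rule bchoice)
  then obtain \<psi> where \<psi>: "\<forall>t\<in>{..<len}. \<bar>\<psi> t\<bar> \<le> real s * E / real K \<and> (\<exists>z::int.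
      binom_poly (Suc s) b (real (n0 + D * t)) = binom_poly (Suc s) b (real n0) + \<beta> * real t + \<psi> t + of_int z)"
    by (rule exE)
  define c where "c = cis2pi (binom_poly (Suc s) b (real n0))"
  have fdec: "f (n0 + D * t) = c * (cis2pi (\<beta> * real t) * cis2pi (\<psi> t))" if "t \<in> {..<len}" for t
  proof -
    have "\<exists>z::int. binom_poly (Suc s) b (real (n0 + D * t))
        = binom_poly (Suc s) b (real n0) + \<beta> * real t + \<psi> t + of_int z"
      using \<psi> that by simp
    then obtain z :: int where "binom_poly (Suc s) b (real (n0 + D * t))
        = binom_poly (Suc s) b (real n0) + \<beta> * real t + \<psi> t + of_int z"
      by (rule exE)
    then show ?thesis unfolding f_def c_def by (simp add: cis2pi_int cis2pi_add del: of_nat_add)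
  qed
  have err: "norm (cis2pi (\<psi> t) - 1) \<le> \<delta> / 4" if "t \<in> {..<len}" for t
  proof -
    have "2 * pi * \<bar>\<psi> t\<bar> \<le> 2 * pi * (real s * E / real K)"
      using \<psi> that by (intro mult_left_mono) auto
    then have "norm (cis2pi (\<psi> t) - 1) \<le> 2 * pi * (real s * E / real K)"
      using cis2pi_sub1_le[of "\<psi> t"] by linarith
    also have "\<dots> \<le> \<delta> / 4" using KE K1 by (simp add: field_simps)
    finally show ?thesis .
  qed
  have "norm (\<Sum>t<len. f (n0 + D * t)) = norm (\<Sum>t<len. cis2pi (\<beta> * real t) * cis2pi (\<psi> t))"
    using fdec by (simp add: sum_distrib_left[symmetric] norm_mult c_def)
  moreover have "real len * (\<delta> / 4) \<le> \<delta> * real L / 4" using prog(1) \<delta>0 by (simp add: mult_right_mono mult.commute)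
  ultimately have geo_big: "\<delta> * real L / 4 \<le> norm (\<Sum>t<len. cis2pi (\<beta> * real t))"
    using big perturbed_geometric_sum[of len \<psi> "\<delta> / 4" \<beta>] err by fastforce
  have "nint_dist \<beta> * norm (\<Sum>t<len. cis2pi (\<beta> * real t)) \<le> 2"
    using geometric_sum_bound[of \<beta> 0 len] by (simp add: lessThan_atLeast0)
  then have "nint_dist \<beta> * (\<delta> * real L / 4) \<le> 2"
    using mult_left_mono[OF geo_big nint_dist_nonneg[of \<beta>]] by linarith
  then have ndb: "nint_dist \<beta> * real L \<le> 8 / \<delta>" using \<delta>0 by (simp add: field_simps)
  have "real N * nint_dist \<beta> \<le> 2 * real D * real K * (nint_dist \<beta> * real L)"
    using mult_right_mono[OF Nle nint_dist_nonneg[of \<beta>]] by (simp add: ac_simps)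
  also have "\<dots> \<le> 2 * real D * real K * (8 / \<delta>)" using ndb by (intro mult_left_mono) auto
  finally show ?thesis unfolding \<beta>_def by (simp add: ac_simps)
qed

section \<open>The inverse theorem for Weyl sums\<close>

definition weyl_controlled :: "nat \<Rightarrow> real \<Rightarrow> nat \<Rightarrow> real \<Rightarrow> bool" where
  "weyl_controlled s \<delta> Q C \<longleftrightarrow> (\<forall>(b::nat\<Rightarrow>real) (N::nat). 1 \<le> N \<longrightarrow>
     \<delta> * real N \<le> norm (\<Sum>n\<in>{1..N}. cis2pi (binom_poly s b (real n))) \<longrightarrow>
     (\<exists>q::nat. 1 \<le> q \<and> q \<le> Q \<and> (\<forall>j\<in>{1..s}. real N ^ j * nint_dist (real q * b j) \<le> C)))"

definition weyl_inverse :: "nat \<Rightarrow> bool" where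
  "weyl_inverse s \<longleftrightarrow> (\<forall>\<delta>>0. \<exists>(Q::nat) (C::real). 1 \<le> Q \<and> weyl_controlled s \<delta> Q C)"

text \<open>A larger density is a stronger hypothesis.\<close>
lemma weyl_controlled_mono: "weyl_controlled s \<delta>' Q C \<Longrightarrow> \<delta>' \<le> \<delta> \<Longrightarrow> weyl_controlled s \<delta> Q C"
  unfolding weyl_controlled_def by (meson mult_right_mono of_nat_0_le_iff order_trans)

lemma rescale_bound:
  fixes x C \<kappa> :: real
  assumes \<kappa>1: "1 \<le> \<kappa>" and x0: "0 \<le> x" and js: "j \<le> s" and NM: "real N \<le> \<kappa> * real M"
    and bound: "real M ^ j * x \<le> C"
  shows "real N ^ j * x \<le> \<kappa> ^ s * max C 0"
proof -
  have "real N ^ j \<le> (\<kappa> * real M) ^ j" using NM by (intro power_mono) auto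
  also have "\<dots> = \<kappa> ^ j * real M ^ j" by (rule power_mult_distrib)
  also have "\<dots> \<le> \<kappa> ^ s * real M ^ j" using \<kappa>1 js by (intro mult_right_mono power_increasing) auto
  finally have "real N ^ j * x \<le> \<kappa> ^ s * real M ^ j * x" using x0 by (rule mult_right_mono)
  then have "real N ^ j * x \<le> \<kappa> ^ s * (real M ^ j * x)" by (simp add: mult.assoc)
  also have "\<dots> \<le> \<kappa> ^ s * max C 0" using bound \<kappa>1 by (intro mult_left_mono) auto
  finally show ?thesis .
qed

text \<open>Stage (1) of the induction step: by van der Corput and the induction hypothesis, for a
  proportion \<open>\<sigma> = \<delta>\<^sup>2 / (8 Q1)\<close> of all shifts \<open>h\<close> one common \<open>q0 \<le> Q1\<close> controls every coefficient
  of the differenced phase.\<close>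
lemma differenced_coeffs_controlled:
  fixes b :: "nat \<Rightarrow> real" and s N Q1 :: nat and \<delta> C1 :: real
  assumes \<delta>0: "0 < \<delta>" and \<delta>1: "\<delta> \<le> 1" and Q1: "1 \<le> Q1"
    and IH: "weyl_controlled s (\<delta>^2/8) Q1 C1" and Nb: "2 / \<delta>^2 \<le> real N"
    and hyp: "\<delta> * real N \<le> norm (\<Sum>n\<in>{1..N}. cis2pi (binom_poly (Suc s) b (real n)))"
  shows "\<exists>G0 q0. G0 \<subseteq> {1..N} \<and> \<delta>^2 / (8 * real Q1) * real N \<le> real (card G0) \<and> 1 \<le> q0 \<and> q0 \<le> Q1 \<and>
    (\<forall>h\<in>G0. \<forall>j\<in>{1..s}. real N ^ j * nint_dist (real q0 * diff_coeffs (Suc s) b h j) \<le> (8 / \<delta>^2)^s * max C1 0)"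
proof -
  define A where "A = (8 / \<delta>^2)^s * max C1 0"
  define good where "good h q \<longleftrightarrow> 1 \<le> q \<and> q \<le> Q1 \<and>
    (\<forall>j\<in>{1..s}. real N ^ j * nint_dist (real q * diff_coeffs (Suc s) b h j) \<le> A)" for h q
  obtain G where G: "G \<subseteq> {1..<N}" "\<delta>^2 * real N / 8 \<le> real (card G)"
    "\<forall>h\<in>G. \<delta>^2 * real N / 8 \<le> real (N - h) \<and>
      \<delta>^2 / 8 * real (N - h) \<le> norm (\<Sum>m\<in>{1..N-h}. cis2pi (binom_poly s (diff_coeffs (Suc s) b h) (real m)))"
    using many_large_differences[OF \<delta>0 Nb hyp] by blast
  have "\<exists>q. good h q" if h: "h \<in> G" for h
  proof -
    have "h \<in> {1..<N}" using G(1) h by blast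
    then have "1 \<le> N - h" by auto
    then obtain q where q: "1 \<le> q" "q \<le> Q1"
      "\<forall>j\<in>{1..s}. real (N-h) ^ j * nint_dist (real q * diff_coeffs (Suc s) b h j) \<le> C1"
      using IH G(3) h unfolding weyl_controlled_def by blast
    have "real N \<le> (8 / \<delta>^2) * real (N - h)" using G(3) h \<delta>0 by (simp add: field_simps)
    moreover have "1 \<le> 8 / \<delta>^2" using \<delta>0 \<delta>1 power_le_one[of \<delta> 2] by (simp add: field_simps)
    ultimately show ?thesis using q rescale_bound[OF _ nint_dist_nonneg]
      unfolding good_def A_def by (metis atLeastAtMost_iff)
  qed
  then obtain qf where qf: "\<And>h. h \<in> G \<Longrightarrow> good h (qf h)" by metis
  have "finite G" using G(1) finite_subset by blast
  then obtain q0 where q0: "q0 \<in> {1..Q1}" "card G \<le> card (qf -` {q0} \<inter> G) * card {1..Q1}"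
    using pigeonhole_card[of qf G "{1..Q1}"] qf Q1 G(2) \<delta>0 unfolding good_def by fastforce
  define G0 where "G0 = qf -` {q0} \<inter> G"
  have "real (card G) \<le> real (card G0) * real Q1"
    using q0(2) unfolding G0_def by (metis card_atLeastAtMost diff_Suc_1 of_nat_le_iff of_nat_mult)
  then have "\<delta>^2 / (8 * real Q1) * real N \<le> real (card G0)" using G(2) Q1 by (simp add: field_simps)
  moreover have "G0 \<subseteq> {1..N}" unfolding G0_def using G(1) by auto
  moreover have "\<forall>h\<in>G0. \<forall>j\<in>{1..s}. real N ^ j * nint_dist (real q0 * diff_coeffs (Suc s) b h j) \<le> A"
    using qf unfolding G0_def good_def by auto
  ultimately show ?thesis using q0(1) unfolding A_def by auto
qed

lemma higher_coeffs_controlled: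
  fixes b :: "nat \<Rightarrow> real" and s N Q1 :: nat and \<delta> C1 \<sigma> A c Es :: real
  assumes \<sigma>_def: "\<sigma> = \<delta>^2 / (8 * real Q1)" and A_def: "A = (8 / \<delta>^2)^s * max C1 0"
    and c_def: "c = 2 * real Q1 / \<sigma>" and Es_def: "Es = descent_bound c (32 / \<sigma>^2) A (real s * real Q1) s"
  assumes \<delta>0: "0 < \<delta>" and \<delta>1: "\<delta> \<le> 1" and Q1: "1 \<le> Q1"
    and IH: "weyl_controlled s (\<delta>^2/8) Q1 C1"
    and Nb: "2 / \<delta>^2 \<le> real N" "16 / \<sigma>^2 \<le> real N" "32 * (c^s * A + real s * real Q1 * Es) / \<sigma>^2 \<le> real N"
    and hyp: "\<delta> * real N \<le> norm (\<Sum>n\<in>{1..N}. cis2pi (binom_poly (Suc s) b (real n)))"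
  shows "\<exists>m::nat. 1 \<le> m \<and> real m \<le> c^s \<and> (\<forall>i\<in>{2..Suc s}. real N ^ i * nint_dist (real m * b i) \<le> Es)"
proof -
  obtain G0 q0 where G0: "G0 \<subseteq> {1..N}" "\<sigma> * real N \<le> real (card G0)" and q0: "1 \<le> q0" "q0 \<le> Q1"
    and H: "\<forall>h\<in>G0. \<forall>j\<in>{1..s}. real N ^ j * nint_dist (real q0 * diff_coeffs (Suc s) b h j) \<le> A"
    using differenced_coeffs_controlled[OF \<delta>0 \<delta>1 Q1 IH Nb(1) hyp] unfolding \<sigma>_def A_def by blast
  have \<sigma>0: "0 < \<sigma>" unfolding \<sigma>_def using \<delta>0 Q1 by simp
  have \<sigma>1: "\<sigma> \<le> 1" unfolding \<sigma>_def using \<delta>0 \<delta>1 Q1 power_le_one[of \<delta> 2] by (simp add: field_simps)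
  have A0: "0 \<le> A" unfolding A_def using \<delta>0 by simp
  have NB: "32 * ((2 * real Q1 / \<sigma>)^s * A + real s * real Q1
      * descent_bound (2 * real Q1 / \<sigma>) (32 / \<sigma>^2) A (real s * real Q1) s) / \<sigma>^2 \<le> real N"
    using Nb(3) unfolding c_def Es_def .
  obtain m where "1 \<le> m" "real m \<le> (2 * real Q1 / \<sigma>)^s" and bound:
    "\<forall>i. Suc s - s < i \<and> i \<le> Suc s \<longrightarrow>
      real N ^ i * nint_dist (real m * b i) \<le> descent_bound (2 * real Q1 / \<sigma>) (32 / \<sigma>^2) A (real s * real Q1) s"
    using descent[OF \<sigma>0 \<sigma>1 Q1 q0 A0 G0 H Nb(2) NB order_refl] by blast
  moreover have "\<forall>i\<in>{2..Suc s}. real N ^ i * nint_dist (real m * b i) \<le> Es"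
    using bound unfolding Es_def c_def by auto
  ultimately show ?thesis unfolding c_def by blast
qed

lemma small_range_bound:
  assumes "real N < N0" "1 \<le> N0" "j \<le> s"
  shows "real N ^ j * nint_dist x \<le> N0 ^ s"
proof -
  have "real N ^ j * nint_dist x \<le> real N ^ j * 1"
    using nint_dist_le_half[of x] by (intro mult_left_mono) auto
  also have "\<dots> \<le> N0 ^ j" using assms(1) by (simp add: power_mono)
  also have "\<dots> \<le> N0 ^ s" using assms by (intro power_increasing) auto
  finally show ?thesis .
qed

lemma coeffs_after_clearing:
  fixes b :: "nat \<Rightarrow> real" and s m N :: nat and E X :: real
  assumes Eb: "\<forall>i\<in>{2..Suc s}. real N ^ i * nint_dist (real m * b i) \<le> E"
    and lin: "real N * nint_dist (real (m * fact (Suc s)) * b 1) \<le> X"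
  shows "\<forall>j\<in>{1..Suc s}. real N ^ j * nint_dist (real (m * fact (Suc s)) * b j) \<le> max X (fact (Suc s) * E)"
proof
  fix j assume j: "j \<in> {1..Suc s}"
  show "real N ^ j * nint_dist (real (m * fact (Suc s)) * b j) \<le> max X (fact (Suc s) * E)"
  proof (cases "j = 1")
    case True then show ?thesis using lin by simp
  next
    case False
    then have j2: "j \<in> {2..Suc s}" using j by auto
    have "nint_dist (real (m * fact (Suc s)) * b j) \<le> real (fact (Suc s)) * nint_dist (real m * b j)"
      using nint_dist_mult_nat[of "fact (Suc s)" "real m * b j"] by (simp add: ac_simps)
    then have "real N ^ j * nint_dist (real (m * fact (Suc s)) * b j)
        \<le> real (fact (Suc s)) * (real N ^ j * nint_dist (real m * b j))"
      by (simp add: mult_left_mono mult.left_commute)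
    also have "\<dots> \<le> real (fact (Suc s)) * E" using Eb j2 by (intro mult_left_mono) auto
    also have "\<dots> = fact (Suc s) * E" by (simp only: of_nat_fact)
    finally show ?thesis by simp
  qed
qed

lemma weyl_controlled_step:
  fixes s Q1 :: nat and \<delta> C1 :: real
  assumes \<delta>0: "0 < \<delta>" and \<delta>1: "\<delta> \<le> 1" and Q1: "1 \<le> Q1" and IH: "weyl_controlled s (\<delta>^2/8) Q1 C1"
  shows "\<exists>(Q::nat) (C::real). 1 \<le> Q \<and> weyl_controlled (Suc s) \<delta> Q C"
proof -
  define \<sigma> where "\<sigma> = \<delta>^2 / (8 * real Q1)"
  define A where "A = (8 / \<delta>^2)^s * max C1 0"
  define c where "c = 2 * real Q1 / \<sigma>"
  define Es where "Es = descent_bound c (32 / \<sigma>^2) A (real s * real Q1) s"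
  define K where "K = nat (ceiling (8 * pi * real s * Es / \<delta>)) + 1"
  define Q where "Q = nat (ceiling (c^s)) * fact (Suc s)"
  define N0 where "N0 = max (2 / \<delta>^2) (max (16 / \<sigma>^2)
    (max (32 * (c^s * A + real s * real Q1 * Es) / \<sigma>^2) (max (2 * real Q * real K) 1)))"
  define C where "C = max (16 * real Q * real K / \<delta>) (max (fact (Suc s) * Es) (N0 ^ Suc s))"
  have "1 \<le> real Q1 * real Q1" using Q1 mult_mono[of 1 "real Q1" 1 "real Q1"] by simp
  then have c1: "1 \<le> c" unfolding c_def \<sigma>_def using \<delta>0 \<delta>1 power_le_one[of \<delta> 2] by (simp add: field_simps)
  have Es0: "0 \<le> Es" unfolding Es_def A_def using c1 by (intro descent_bound_nonneg) auto
  have K1: "1 \<le> K" unfolding K_def by simp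
  have "8 * pi * real s * Es / \<delta> \<le> real K" unfolding K_def by linarith
  then have KE: "2 * pi * real s * Es \<le> \<delta> * real K / 4" using \<delta>0 by (simp add: field_simps)
  have "1 \<le> c^s" using c1 by (rule one_le_power)
  then have "(1::int) \<le> ceiling (c^s)" using le_of_int_ceiling[of "c^s"] by linarith
  then have "1 \<le> nat (ceiling (c^s))" using nat_mono by fastforce
  then have Q1': "1 \<le> Q"
    unfolding Q_def using mult_le_mono[OF _ fact_ge_1[of "Suc s"], of 1] by (simp only: nat_mult_1)
  have "weyl_controlled (Suc s) \<delta> Q C"
    unfolding weyl_controlled_def
  proof (intro allI impI)
    fix b :: "nat \<Rightarrow> real" and N :: nat
    assume N1: "1 \<le> N" and hyp: "\<delta> * real N \<le> norm (\<Sum>n\<in>{1..N}. cis2pi (binom_poly (Suc s) b (real n)))"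
    show "\<exists>q::nat. 1 \<le> q \<and> q \<le> Q \<and> (\<forall>j\<in>{1..Suc s}. real N ^ j * nint_dist (real q * b j) \<le> C)"
    proof (cases "real N < N0")
      case True
      have "1 \<le> N0" unfolding N0_def by simp
      moreover have "N0 ^ Suc s \<le> C" unfolding C_def by (intro max.coboundedI2 max.cobounded2)
      ultimately have "real N ^ j * nint_dist (real 1 * b j) \<le> C" if "j \<in> {1..Suc s}" for j
        using small_range_bound[OF True, of j "Suc s" "real 1 * b j"] that by fastforce
      then show ?thesis using Q1' by blast
    next
      case False
      then have Nb: "2 / \<delta>^2 \<le> real N" "16 / \<sigma>^2 \<le> real N"
        "32 * (c^s * A + real s * real Q1 * Es) / \<sigma>^2 \<le> real N" "2 * real Q * real K \<le> real N"
        unfolding N0_def by auto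
      obtain m where m: "1 \<le> m" "real m \<le> c^s" and Eb: "\<forall>i\<in>{2..Suc s}. real N ^ i * nint_dist (real m * b i) \<le> Es"
        using higher_coeffs_controlled[OF \<sigma>_def A_def c_def Es_def \<delta>0 \<delta>1 Q1 IH Nb(1-3) hyp] by blast
      define D where "D = m * fact (Suc s)"
      have "real m \<le> of_int (ceiling (c^s))" using m(2) le_of_int_ceiling[of "c^s"] by linarith
      then have "m \<le> nat (ceiling (c^s))" by linarith
      then have DQ: "D \<le> Q" unfolding D_def Q_def by simp
      have "2 * real D * real K \<le> 2 * real Q * real K" using DQ by (intro mult_right_mono) auto
      then have "real (2 * (D * K)) \<le> real N" using Nb(4) by simp
      then have "2 * (D * K) \<le> N" by (simp only: of_nat_le_iff)
      then have "real N * nint_dist (real D * b 1) \<le> 16 * real D * real K / \<delta>"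
        using linear_coeff_bound[OF \<delta>0 m(1) hyp Eb K1 KE] unfolding D_def by blast
      also have "\<dots> \<le> 16 * real Q * real K / \<delta>" using DQ \<delta>0 by (intro divide_right_mono mult_right_mono) auto
      finally have lin: "real N * nint_dist (real D * b 1) \<le> 16 * real Q * real K / \<delta>" .
      have "\<forall>j\<in>{1..Suc s}. real N ^ j * nint_dist (real D * b j) \<le> max (16 * real Q * real K / \<delta>) (fact (Suc s) * Es)"
        using coeffs_after_clearing[OF Eb lin[unfolded D_def]] unfolding D_def .
      moreover have "max (16 * real Q * real K / \<delta>) (fact (Suc s) * Es) \<le> C"
        unfolding C_def by (intro max.mono order_refl max.cobounded1)
      ultimately have "\<forall>j\<in>{1..Suc s}. real N ^ j * nint_dist (real D * b j) \<le> C" by (meson order_trans)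
      moreover have "1 \<le> D" unfolding D_def using m(1) by (simp add: Suc_le_eq)
      ultimately show ?thesis using DQ by blast
    qed
  qed
  then show ?thesis using Q1' by blast
qed

text \<open>The induction step, reducing to \<open>\<delta> \<le> 1\<close> by monotonicity in \<open>\<delta>\<close>.\<close>
lemma weyl_inverse_Suc:
  assumes IH: "weyl_inverse s"
  shows "weyl_inverse (Suc s)"
  unfolding weyl_inverse_def
proof (intro allI impI)
  fix \<delta> :: real assume \<delta>0: "0 < \<delta>"
  define \<delta>1 where "\<delta>1 = min \<delta> 1"
  have d1: "0 < \<delta>1" "\<delta>1 \<le> 1" "\<delta>1 \<le> \<delta>" using \<delta>0 unfolding \<delta>1_def by auto
  have "0 < \<delta>1^2/8" using d1 by simp
  then obtain Q1 C1 where "1 \<le> Q1" "weyl_controlled s (\<delta>1^2/8) Q1 C1"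
    using IH unfolding weyl_inverse_def by blast
  then obtain Q C where "1 \<le> Q" "weyl_controlled (Suc s) \<delta>1 Q C"
    using weyl_controlled_step[OF d1(1,2)] by blast
  moreover have "weyl_controlled (Suc s) \<delta> Q C"
    using weyl_controlled_mono[OF \<open>weyl_controlled (Suc s) \<delta>1 Q C\<close> d1(3)] .
  ultimately show "\<exists>(Q::nat) (C::real). 1 \<le> Q \<and> weyl_controlled (Suc s) \<delta> Q C" by blast
qed

theorem weyl_inverse_theorem: "weyl_inverse s"
proof (induction s)
  case 0
  show ?case unfolding weyl_inverse_def weyl_controlled_def by (auto intro!: exI[of _ 1])
next
  case (Suc s)
  then show ?case by (rule weyl_inverse_Suc)
qed

section \<open>From small diameter to smoothness\<close>

text \<open>A phase within \<open>1/10\<close> of an integer has \<open>Re e(x) \<ge> cos(pi/5) \<ge> 1/2\<close>.\<close>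
lemma Re_cis2pi_ge_half: assumes "nint_dist x \<le> 1/10" shows "1/2 \<le> Re (cis2pi x)"
proof -
  define y where "y = x - of_int (round x)"
  have ey: "cis2pi x = cis2pi y" unfolding y_def by (rule cis2pi_round)
  have ny: "\<bar>y\<bar> \<le> 1/10" using assms by (simp add: y_def nint_dist_def)
  have c: "cos (2 * pi * y) = cos (2 * pi * \<bar>y\<bar>)"
    by (cases "y \<ge> 0") (auto simp: abs_if)
  have "cos (pi/3) \<le> cos (2 * pi * \<bar>y\<bar>)"
  proof (rule cos_monotone_0_pi_le)
    show "0 \<le> 2 * pi * \<bar>y\<bar>" by simp
    show "2 * pi * \<bar>y\<bar> \<le> pi / 3" using ny pi_gt_zero by (simp add: field_simps)
    show "pi / 3 \<le> pi" using pi_gt_zero by simp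
  qed
  then show ?thesis using ey c by (simp add: cis2pi_def cos_60)
qed

lemma weyl_sum_lower_bound:
  fixes f :: "nat \<Rightarrow> real"
  assumes "\<forall>n\<in>{1..N}. nint_dist (f n - f 1) \<le> 1/10"
  shows "1/2 * real N \<le> norm (\<Sum>n\<in>{1..N}. cis2pi (f n))"
proof -
  have eq: "(\<Sum>n\<in>{1..N}. cis2pi (f n)) = cis2pi (f 1) * (\<Sum>n\<in>{1..N}. cis2pi (f n - f 1))"
    by (simp add: sum_distrib_left cis2pi_add[symmetric])
  have "1/2 * real N = (\<Sum>n\<in>{1..N}. (1/2::real))" by simp
  also have "\<dots> \<le> (\<Sum>n\<in>{1..N}. Re (cis2pi (f n - f 1)))" using assms Re_cis2pi_ge_half by (intro sum_mono) auto
  also have "\<dots> = Re (\<Sum>n\<in>{1..N}. cis2pi (f n - f 1))" by simp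
  also have "\<dots> \<le> norm (\<Sum>n\<in>{1..N}. cis2pi (f n - f 1))" by (rule complex_Re_le_cmod)
  also have "\<dots> = norm (\<Sum>n\<in>{1..N}. cis2pi (f n))" unfolding eq by (simp add: norm_mult)
  finally show ?thesis .
qed

lemma nint_dist_le_diam:
  assumes "n \<in> {1..N}" "k \<in> {1..N}"
  shows "nint_dist (f (real n) - f (real k)) \<le> diam_on (int_range N) f"
proof -
  have "(real n, real k) \<in> int_range N \<times> int_range N" unfolding int_range_def using assms by auto
  moreover have "finite (int_range N \<times> int_range N)" unfolding int_range_def by simp
  ultimately have "nint_dist (f (fst (real n, real k)) - f (snd (real n, real k))) \<le> diam_on (int_range N) f"
    unfolding diam_on_def by (intro cSUP_upper) (auto intro: bdd_above_finite finite_imageI)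
  then show ?thesis by simp
qed

lemma smooth_norm_le:
  assumes "1 \<le> s" "\<forall>j\<in>{1..s}. real N ^ j * nint_dist (binom_coeffs s a j) \<le> C"
  shows "smooth_norm N s a \<le> C"
  unfolding smooth_norm_def using assms by (intro cSUP_least) auto

theorem lemma2p3:
  fixes s :: nat
  assumes "s \<ge> 1"
  shows "\<exists>(Q::nat) (C::real). Q \<ge> 1 \<and> C \<ge> 1 \<and>
    (\<forall>(a :: nat \<Rightarrow> real) (N :: nat). N \<ge> 1 \<longrightarrow>
       diam_on (int_range N) (poly_phase s a) \<le> 1/10 \<longrightarrow>
       (\<exists>q::nat. 1 \<le> q \<and> q \<le> Q \<and>
          smooth_norm N s (\<lambda>j. real q * a j) \<le> C))"
proof -
  obtain Q C where Q: "1 \<le> Q" and inv: "weyl_controlled s (1/2) Q C"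
    using weyl_inverse_theorem[of s] unfolding weyl_inverse_def by (meson half_gt_zero zero_less_one)
  have "\<exists>q::nat. 1 \<le> q \<and> q \<le> Q \<and> smooth_norm N s (\<lambda>j. real q * a j) \<le> max C 1"
    if N1: "1 \<le> N" and diam: "diam_on (int_range N) (poly_phase s a) \<le> 1/10" for a N
  proof -
    define b where "b = binom_coeffs s a"
    have "\<forall>n\<in>{1..N}. nint_dist (binom_poly s b (real n) - binom_poly s b (real 1)) \<le> 1/10"
      using nint_dist_le_diam[of _ N 1 "poly_phase s a"] N1 diam
      unfolding b_def poly_phase_eq_binom_poly by fastforce
    then have "1/2 * real N \<le> norm (\<Sum>n\<in>{1..N}. cis2pi (binom_poly s b (real n)))"
      by (rule weyl_sum_lower_bound)
    then obtain q where q: "1 \<le> q" "q \<le> Q" "\<forall>j\<in>{1..s}. real N ^ j * nint_dist (real q * b j) \<le> C"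
      using inv N1 unfolding weyl_controlled_def by blast
    then have "smooth_norm N s (\<lambda>j. real q * a j) \<le> max C 1"
      using assms by (intro smooth_norm_le) (auto simp: binom_coeffs_scale b_def intro: le_max_iff_disj[THEN iffD2])
    then show ?thesis using q by blast
  qed
  then show ?thesis using Q by (intro exI[of _ Q] exI[of _ "max C 1"]) auto
qed

end
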